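(* (Ordered SDC Resolution Completeness.) Let $N$ be a set of MSL(SDC) clauses that is saturated up to redundancy with respect to SDC-Resolution and SDC-Factoring (with the atom ordering $\prec$ and selection function $\mathrm{sel}$ below). Then $N$ is unsatisfiable if and only if $\square\in\mathrm{ground}(N)$. Moreover, if $\square\notin\mathrm{ground}(N)$, then the partial model $I_N$ satisfies $N$.
   Context: Clauses: a clause is written $\Gamma\rightarrow\Delta$ where $\Gamma,\Delta$ are finite multisets of atoms (negative resp. positive literals); $\square$ is the empty clause. Terms: a variable and a constant are straight; $f(s_1,\dots,s_n)$ is straight if $s_1,\dots,s_n$ are pairwise distinct variables except for at most one argument $s_i$ that is straight. Depth of variables/constants is $0$, depth$(f(s_1,\dots,s_n))=1+\max_i$ depth$(s_i)$; shallow = depth at most 1; linear = no variable occurs twice; complex = not a variable. Straight dismatching constraints (SDCs): an atomic SDC is $t\neq s$ with $s,t$ variable-disjoint and $s$ straight; an SDC $\pi=\bigwedge_i t_i\neq s_i$ is a finite conjunction of these. $\pi\sigma=\bigwedge_i t_i\sigma\neq s_i$. A solution of $\pi$ is a grounding substitution $\delta$ such that no $t_i\delta$ is an instance of $s_i$; solvable = has a solution. $\mathrm{norm}(\pi)$ is the normal form under: $\pi\wedge f(\vec t)\neq y\to\bot$; $\pi\wedge f(\vec t)\neq f(y_1,\dots,y_n)\to\bot$ ($y_j$ variables); $\pi\wedge f(t_1,\dots,t_n)\neq f(s_1,\dots,s_n)\to\pi\wedge t_i\neq s_i$ if $s_i$ is complex; $\pi\wedge f(\vec t)\neq g(\vec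 s)\to\pi$ for $f\neq g$; $\pi\wedge x\neq s\wedge x\neq s\sigma\to\pi\wedge x\neq s$. Constrained clauses $(C;\pi)$: ground instances are $C\delta$ with $\delta$ a solution of $\pi$ grounding all variables of $C$ and of the left-hand sides of $\pi$; $\mathrm{ground}(N)$ is the union over $N$. A Herbrand interpretation $I$ is a set of ground atoms; $I\models\Gamma\rightarrow\Delta$ (ground) iff $\Delta\cap I\neq\emptyset$ or $\Gamma\not\subseteq I$; $I\models(C;\pi)$ iff $I$ satisfies all its ground instances; $N$ is satisfiable iff it has a Herbrand model. MSL(SDC) clause: $(C;\pi)$ with $\pi$ an SDC and $C=\Gamma\rightarrow\Delta$ such that (i) all argument terms in $\Delta$ are shallow, each atom of $\Delta$ is linear and distinct atoms of $\Delta$ are variable-disjoint, (ii) all predicates are monadic, (iii) no equations in $\Delta$, (iv) no equations in $\Gamma$, or $\Gamma=\{s\approx t\}$, $\Delta$ empty and $s,t$ non-unifiable. Ordering: $\prec$ is an atom ordering (irreflexive, well-founded, total on ground atoms), extended to literals ($A\mapsto\{A\}$, $\neg A\mapsto\{A,A\}$, multiset extension) and to ground clauses (multiset extension); for ground atoms $Q(s)$, $P(t)$ with $s$ a proper subterm of $t$, $\neg Q(s)$ is not greater than $P(t)$. For a set $M$ of ground clauses, $M^{\prec C}=\{D\in M\mid D\prec C\}$. A literal $A$ is maximal [strictly maximal] in $(C\vee A;\pi)$ if some solution $\delta$ of $\pi$ gives $B\delta\preceq A\delta$ [$B\delta\prec A\delta$] for all literals $B$ of $C$. Selection: for $(S_1(t_1),\dots,S_n(t_n)\rightarrow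 P_1(s_1),\dots,P_m(s_m);\pi)$, $\mathrm{sel}(C)$ consists of those $S_i(t_i)$ with (1) $t_i$ not a variable, or (2) all $t_1,\dots,t_n$ variables and $t_i\notin\mathrm{vars}(s_1,\dots,s_m)$, or (3) $\{t_1,\dots,t_n\}\subseteq\mathrm{vars}(s_1,\dots,s_m)$ and $s_j=t_i$ for some $j$. SDC-Resolution: from variable-disjoint $(\Gamma_1\rightarrow\Delta_1,A;\pi_1)$, $(\Gamma_2,B\rightarrow\Delta_2;\pi_2)$ infer $((\Gamma_1,\Gamma_2\rightarrow\Delta_1,\Delta_2)\sigma;\mathrm{norm}((\pi_1\wedge\pi_2)\sigma))$ if $\sigma=\mathrm{mgu}(A,B)$, $\mathrm{norm}((\pi_1\wedge\pi_2)\sigma)$ is solvable, $A\sigma$ is strictly maximal in $(\Gamma_1\rightarrow\Delta_1,A;\pi_1)\sigma$ and $\mathrm{sel}(\Gamma_1\rightarrow\Delta_1,A)=\emptyset$, and either $B\in\mathrm{sel}(\Gamma_2,B\rightarrow\Delta_2)$ or ($\mathrm{sel}(\Gamma_2,B\rightarrow\Delta_2)=\emptyset$ and $\neg B\sigma$ is maximal in $(\Gamma_2,B\rightarrow\Delta_2;\pi_2)\sigma$). SDC-Factoring: from $(\Gamma\rightarrow\Delta,A,B;\pi)$ infer $((\Gamma\rightarrow\Delta,A)\sigma;\mathrm{norm}(\pi\sigma))$ if $\sigma=\mathrm{mgu}(A,B)$, $\mathrm{sel}(\Gamma\rightarrow\Delta,A,B)=\emptyset$, $A\sigma$ is maximal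 in $(\Gamma\rightarrow\Delta,A,B;\pi)\sigma$, and $\mathrm{norm}(\pi\sigma)$ is solvable. Redundancy and saturation: $(C;\pi)$ is redundant in $N$ if for every $D\in\mathrm{ground}((C;\pi))$ there are $D_1,\dots,D_n\in\mathrm{ground}(N)^{\prec D}$ with $D_1,\dots,D_n\models D$. $N$ is saturated up to redundancy if for every SDC-Resolution or SDC-Factoring inference from clauses of $N$ the conclusion $(R;\pi)$ is redundant in $N$ or $\mathrm{ground}((R;\pi))\subseteq\mathrm{ground}(N)$. Partial model: for $C\in\mathrm{ground}(N)$ let $I_C=\bigcup\{\delta_D\mid D\in\mathrm{ground}(N),D\prec C\}$, where $\delta_D=\{A\}$ if $D=\Gamma\rightarrow\Delta,A$ with $A$ strictly maximal in $D$, $\mathrm{sel}(D)=\emptyset$ and $I_D\not\models D$, and $\delta_D=\emptyset$ otherwise (for a ground instance $D=C'\delta$ of $(C';\pi')\in N$, $\mathrm{sel}(D)$ means $\mathrm{sel}(C')\delta$). $I_N=\bigcup_{C\in\mathrm{ground}(N)}\delta_C$. *)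

theory Defs
  imports Main "HOL-Library.Multiset"
begin

datatype 'f trm = Var nat | Fun 'f "'f trm list"

fun vars_trm :: "'f trm \<Rightarrow> nat set" where
  "vars_trm (Var x) = {x}"
| "vars_trm (Fun f ts) = (\<Union>t\<in>set ts. vars_trm t)"

fun vars_list :: "'f trm \<Rightarrow> nat list" where
  "vars_list (Var x) = [x]"
| "vars_list (Fun f ts) = concat (map vars_list ts)"

definition linear_trm :: "'f trm \<Rightarrow> bool" where
  "linear_trm t \<longleftrightarrow> distinct (vars_list t)"

definition ground_trm :: "'f trm \<Rightarrow> bool" where
  "ground_trm t \<longleftrightarrow> vars_trm t = {}"

fun wf_trm :: "('f \<Rightarrow> nat) \<Rightarrow> 'f trm \<Rightarrow> bool" where
  "wf_trm ar (Var x) = True"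
| "wf_trm ar (Fun f ts) = (length ts = ar f \<and> (\<forall>t\<in>set ts. wf_trm ar t))"

fun depth :: "'f trm \<Rightarrow> nat" where
  "depth (Var x) = 0"
| "depth (Fun f ts) = (if ts = [] then 0 else 1 + Max (set (map depth ts)))"

definition shallow :: "'f trm \<Rightarrow> bool" where
  "shallow t \<longleftrightarrow> depth t \<le> 1"

definition is_var :: "'f trm \<Rightarrow> bool" where
  "is_var t \<longleftrightarrow> (\<exists>x. t = Var x)"

fun straight :: "'f trm \<Rightarrow> bool" where
  "straight (Var x) = True"
| "straight (Fun f ss) =
     (linear_trm (Fun f ss) \<and>
      (\<exists>i. \<forall>j<length ss. j \<noteq> i \<longrightarrow> is_var (ss ! j)) \<and>
      (\<forall>s\<in>set ss. straight s))"

fun psubterms :: "'f trm \<Rightarrow> 'f trm set" where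
  "psubterms (Var x) = {}"
| "psubterms (Fun f ts) = (\<Union>t\<in>set ts. insert t (psubterms t))"

fun subst :: "(nat \<Rightarrow> 'f trm) \<Rightarrow> 'f trm \<Rightarrow> 'f trm" where
  "subst \<sigma> (Var x) = \<sigma> x"
| "subst \<sigma> (Fun f ts) = Fun f (map (subst \<sigma>) ts)"

definition instance_of :: "'f trm \<Rightarrow> 'f trm \<Rightarrow> bool" where
  "instance_of t s \<longleftrightarrow> (\<exists>\<tau>. subst \<tau> s = t)"

datatype ('f, 'p) atom = Pred 'p "'f trm" | Eq "'f trm" "'f trm"

fun subst_atom :: "(nat \<Rightarrow> 'f trm) \<Rightarrow> ('f, 'p) atom \<Rightarrow> ('f, 'p) atom" where
  "subst_atom \<sigma> (Pred P t) = Pred P (subst \<sigma> t)"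
| "subst_atom \<sigma> (Eq s t) = Eq (subst \<sigma> s) (subst \<sigma> t)"

fun vars_atom :: "('f, 'p) atom \<Rightarrow> nat set" where
  "vars_atom (Pred P t) = vars_trm t"
| "vars_atom (Eq s t) = vars_trm s \<union> vars_trm t"

fun wf_atom :: "('f \<Rightarrow> nat) \<Rightarrow> ('f, 'p) atom \<Rightarrow> bool" where
  "wf_atom ar (Pred P t) = wf_trm ar t"
| "wf_atom ar (Eq s t) = (wf_trm ar s \<and> wf_trm ar t)"

definition ground_atom :: "('f, 'p) atom \<Rightarrow> bool" where
  "ground_atom A \<longleftrightarrow> vars_atom A = {}"

datatype ('f, 'p) lit = Pos "('f, 'p) atom" | Neg "('f, 'p) atom"

fun subst_lit :: "(nat \<Rightarrow> 'f trm) \<Rightarrow> ('f, 'p) lit \<Rightarrow> ('f, 'p) lit" where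
  "subst_lit \<sigma> (Pos A) = Pos (subst_atom \<sigma> A)"
| "subst_lit \<sigma> (Neg A) = Neg (subst_atom \<sigma> A)"

text \<open>A clause \<open>\<Gamma> \<rightarrow> \<Delta>\<close> is the pair \<open>(\<Gamma>, \<Delta>)\<close> of multisets of atoms.\<close>
type_synonym ('f, 'p) clause = "('f, 'p) atom multiset \<times> ('f, 'p) atom multiset"

definition lits :: "('f, 'p) clause \<Rightarrow> ('f, 'p) lit multiset" where
  "lits C = image_mset Neg (fst C) + image_mset Pos (snd C)"

definition subst_cl :: "(nat \<Rightarrow> 'f trm) \<Rightarrow> ('f, 'p) clause \<Rightarrow> ('f, 'p) clause" where
  "subst_cl \<sigma> C = (image_mset (subst_atom \<sigma>) (fst C), image_mset (subst_atom \<sigma>) (snd C))"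

definition vars_cl :: "('f, 'p) clause \<Rightarrow> nat set" where
  "vars_cl C = (\<Union>A\<in>set_mset (fst C + snd C). vars_atom A)"

definition empty_cl :: "('f, 'p) clause" where
  "empty_cl = ({#}, {#})"

section \<open>Straight dismatching constraints\<close>

text \<open>An SDC is a multiset of atomic constraints; the pair \<open>(t, s)\<close> stands for \<open>t \<noteq> s\<close>.\<close>
type_synonym 'f sdc = "('f trm \<times> 'f trm) multiset"

definition subst_sdc :: "(nat \<Rightarrow> 'f trm) \<Rightarrow> 'f sdc \<Rightarrow> 'f sdc" where
  "subst_sdc \<sigma> \<pi> = image_mset (\<lambda>(t, s). (subst \<sigma> t, s)) \<pi>"

definition lhs_vars :: "'f sdc \<Rightarrow> nat set" where
  "lhs_vars \<pi> = (\<Union>c\<in>set_mset \<pi>. vars_trm (fst c))"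

definition is_sdc :: "'f sdc \<Rightarrow> bool" where
  "is_sdc \<pi> \<longleftrightarrow> (\<forall>(t, s)\<in>set_mset \<pi>. vars_trm t \<inter> vars_trm s = {} \<and> straight s)"

definition grounding :: "('f \<Rightarrow> nat) \<Rightarrow> (nat \<Rightarrow> 'f trm) \<Rightarrow> bool" where
  "grounding ar \<delta> \<longleftrightarrow> (\<forall>x. ground_trm (\<delta> x) \<and> wf_trm ar (\<delta> x))"

definition solution :: "('f \<Rightarrow> nat) \<Rightarrow> (nat \<Rightarrow> 'f trm) \<Rightarrow> 'f sdc \<Rightarrow> bool" where
  "solution ar \<delta> \<pi> \<longleftrightarrow> grounding ar \<delta> \<and> (\<forall>(t, s)\<in>set_mset \<pi>. \<not> instance_of (subst \<delta> t) s)"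

definition solvable :: "('f \<Rightarrow> nat) \<Rightarrow> 'f sdc \<Rightarrow> bool" where
  "solvable ar \<pi> \<longleftrightarrow> (\<exists>\<delta>. solution ar \<delta> \<pi>)"

text \<open>Normalisation; \<open>None\<close> represents \<open>\<bottom>\<close>.\<close>
inductive norm_step :: "'f sdc option \<Rightarrow> 'f sdc option \<Rightarrow> bool" where
  r1: "norm_step (Some (\<pi> + {#(Fun f ts, Var y)#})) None"
| r2: "length ys = length ts \<Longrightarrow> (\<forall>y\<in>set ys. is_var y) \<Longrightarrow>
       norm_step (Some (\<pi> + {#(Fun f ts, Fun f ys)#})) None"
| r3: "length ss = length ts \<Longrightarrow> i < length ss \<Longrightarrow> \<not> is_var (ss ! i) \<Longrightarrow>
       norm_step (Some (\<pi> + {#(Fun f ts, Fun f ss)#})) (Some (\<pi> + {#(ts ! i, ss ! i)#}))"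
| r4: "f \<noteq> g \<Longrightarrow> norm_step (Some (\<pi> + {#(Fun f ts, Fun g ss)#})) (Some \<pi>)"
| r5: "norm_step (Some (\<pi> + {#(Var x, s), (Var x, subst \<sigma> s)#})) (Some (\<pi> + {#(Var x, s)#}))"

definition norm :: "'f sdc \<Rightarrow> 'f sdc option" where
  "norm \<pi> = (SOME r. norm_step\<^sup>*\<^sup>* (Some \<pi>) r \<and> (\<forall>r'. \<not> norm_step r r'))"

definition solvable_opt :: "('f \<Rightarrow> nat) \<Rightarrow> 'f sdc option \<Rightarrow> bool" where
  "solvable_opt ar r \<longleftrightarrow> (case r of None \<Rightarrow> False | Some \<pi> \<Rightarrow> solvable ar \<pi>)"

type_synonym ('f, 'p) cclause = "('f, 'p) clause \<times> 'f sdc"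

definition ground_inst :: "('f \<Rightarrow> nat) \<Rightarrow> ('f, 'p) cclause set \<Rightarrow> ('f, 'p) clause set" where
  "ground_inst ar N = {subst_cl \<delta> C | C \<pi> \<delta>. (C, \<pi>) \<in> N \<and> solution ar \<delta> \<pi>}"

definition true_cl :: "('f, 'p) atom set \<Rightarrow> ('f, 'p) clause \<Rightarrow> bool" where
  "true_cl I C \<longleftrightarrow> set_mset (snd C) \<inter> I \<noteq> {} \<or> \<not> set_mset (fst C) \<subseteq> I"

definition models :: "('f \<Rightarrow> nat) \<Rightarrow> ('f, 'p) atom set \<Rightarrow> ('f, 'p) cclause set \<Rightarrow> bool" where
  "models ar I N \<longleftrightarrow> (\<forall>D\<in>ground_inst ar N. true_cl I D)"

definition satisfiable :: "('f \<Rightarrow> nat) \<Rightarrow> ('f, 'p) cclause set \<Rightarrow> bool" where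
  "satisfiable ar N \<longleftrightarrow>
     (\<exists>I. (\<forall>A\<in>I. ground_atom A \<and> wf_atom ar A) \<and> models ar I N)"

definition entails :: "('f, 'p) clause set \<Rightarrow> ('f, 'p) clause \<Rightarrow> bool" where
  "entails M D \<longleftrightarrow> (\<forall>I. (\<forall>D'\<in>M. true_cl I D') \<longrightarrow> true_cl I D)"

definition wf_ccl :: "('f \<Rightarrow> nat) \<Rightarrow> ('f, 'p) cclause \<Rightarrow> bool" where
  "wf_ccl ar Cl \<longleftrightarrow>
     (\<forall>A\<in>set_mset (fst (fst Cl) + snd (fst Cl)). wf_atom ar A) \<and>
     (\<forall>(t, s)\<in>set_mset (snd Cl). wf_trm ar t \<and> wf_trm ar s)"

definition msl_sdc :: "('f, 'p) cclause \<Rightarrow> bool" where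
  "msl_sdc Cl \<longleftrightarrow>
     (let \<Gamma> = fst (fst Cl); \<Delta> = snd (fst Cl); \<pi> = snd Cl in
      is_sdc \<pi> \<and>
      \<comment> \<open>(i) shallow, linear, pairwise variable-disjoint head atoms\<close>
      (\<forall>A\<in>set_mset \<Delta>. \<forall>P t. A = Pred P t \<longrightarrow> shallow t \<and> linear_trm t) \<and>
      (\<forall>A B \<Delta>0. \<Delta> = \<Delta>0 + {#A, B#} \<longrightarrow> vars_atom A \<inter> vars_atom B = {}) \<and>
      \<comment> \<open>(ii) monadic predicates: built into the datatype \<open>atom\<close>\<close>
      \<comment> \<open>(iii) no equations in \<Delta>\<close>
      (\<forall>A\<in>set_mset \<Delta>. \<forall>s t. A \<noteq> Eq s t) \<and>
      \<comment> \<open>(iv)\<close>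
      ((\<forall>A\<in>set_mset \<Gamma>. \<forall>s t. A \<noteq> Eq s t) \<or>
       (\<exists>s t. \<Gamma> = {#Eq s t#} \<and> \<Delta> = {#} \<and> \<not> (\<exists>\<sigma>. subst \<sigma> s = subst \<sigma> t))))"

definition lit_ms :: "('f, 'p) lit \<Rightarrow> ('f, 'p) atom multiset" where
  "lit_ms L = (case L of Pos A \<Rightarrow> {#A#} | Neg A \<Rightarrow> {#A, A#})"

definition lit_less :: "(('f, 'p) atom \<Rightarrow> ('f, 'p) atom \<Rightarrow> bool) \<Rightarrow> ('f, 'p) lit \<Rightarrow> ('f, 'p) lit \<Rightarrow> bool" where
  "lit_less lt L L' \<longleftrightarrow> (lit_ms L, lit_ms L') \<in> mult {(x, y). lt x y}"

definition lit_le :: "(('f, 'p) atom \<Rightarrow> ('f, 'p) atom \<Rightarrow> bool) \<Rightarrow> ('f, 'p) lit \<Rightarrow> ('f, 'p) lit \<Rightarrow> bool" where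
  "lit_le lt L L' \<longleftrightarrow> lit_less lt L L' \<or> L = L'"

definition cl_less :: "(('f, 'p) atom \<Rightarrow> ('f, 'p) atom \<Rightarrow> bool) \<Rightarrow> ('f, 'p) clause \<Rightarrow> ('f, 'p) clause \<Rightarrow> bool" where
  "cl_less lt C D \<longleftrightarrow> (lits C, lits D) \<in> mult {(L, L'). lit_less lt L L'}"

definition atom_ordering :: "('f \<Rightarrow> nat) \<Rightarrow> (('f, 'p) atom \<Rightarrow> ('f, 'p) atom \<Rightarrow> bool) \<Rightarrow> bool" where
  "atom_ordering ar lt \<longleftrightarrow>
     (\<forall>A. \<not> lt A A) \<and> transp lt \<and> wf {(x, y). lt x y} \<and>
     (\<forall>A B. ground_atom A \<and> wf_atom ar A \<and> ground_atom B \<and> wf_atom ar B \<and> A \<noteq> B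
            \<longrightarrow> lt A B \<or> lt B A) \<and>
     (\<forall>P Q s t. ground_atom (Pred Q s) \<and> wf_atom ar (Pred Q s) \<and>
                ground_atom (Pred P t) \<and> wf_atom ar (Pred P t) \<and> s \<in> psubterms t
                \<longrightarrow> \<not> lit_less lt (Pos (Pred P t)) (Neg (Pred Q s)))"

definition maximal :: "('f \<Rightarrow> nat) \<Rightarrow> (('f, 'p) atom \<Rightarrow> ('f, 'p) atom \<Rightarrow> bool) \<Rightarrow>
    ('f, 'p) lit \<Rightarrow> ('f, 'p) cclause \<Rightarrow> bool" where
  "maximal ar lt L Cl \<longleftrightarrow> L \<in># lits (fst Cl) \<and>
     (\<exists>\<delta>. solution ar \<delta> (snd Cl) \<and>
        (\<forall>B\<in>set_mset (lits (fst Cl) - {#L#}). lit_le lt (subst_lit \<delta> B) (subst_lit \<delta> L)))"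

definition strictly_maximal :: "('f \<Rightarrow> nat) \<Rightarrow> (('f, 'p) atom \<Rightarrow> ('f, 'p) atom \<Rightarrow> bool) \<Rightarrow>
    ('f, 'p) lit \<Rightarrow> ('f, 'p) cclause \<Rightarrow> bool" where
  "strictly_maximal ar lt L Cl \<longleftrightarrow> L \<in># lits (fst Cl) \<and>
     (\<exists>\<delta>. solution ar \<delta> (snd Cl) \<and>
        (\<forall>B\<in>set_mset (lits (fst Cl) - {#L#}). lit_less lt (subst_lit \<delta> B) (subst_lit \<delta> L)))"

definition gstrictly_maximal :: "(('f, 'p) atom \<Rightarrow> ('f, 'p) atom \<Rightarrow> bool) \<Rightarrow>
    ('f, 'p) lit \<Rightarrow> ('f, 'p) clause \<Rightarrow> bool" where
  "gstrictly_maximal lt L C \<longleftrightarrow> L \<in># lits C \<and>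
     (\<forall>B\<in>set_mset (lits C - {#L#}). lit_less lt B L)"

definition sel :: "('f, 'p) clause \<Rightarrow> ('f, 'p) atom multiset" where
  "sel C = (let \<Gamma> = fst C; \<Delta> = snd C;
                 vD = (\<Union>A\<in>set_mset \<Delta>. vars_atom A);
                 args = {t. \<exists>S. Pred S t \<in># \<Gamma>} in
     filter_mset (\<lambda>A. case A of
        Pred S t \<Rightarrow>
          \<not> is_var t
        \<or> ((\<forall>t'\<in>args. is_var t') \<and> (\<forall>x. t = Var x \<longrightarrow> x \<notin> vD))
        \<or> (args \<subseteq> Var ` vD \<and> (\<exists>P. Pred P t \<in># \<Delta>))
      | Eq s t \<Rightarrow> False) \<Gamma>)"

section \<open>Inferences\<close>

definition is_mgu :: "(nat \<Rightarrow> 'f trm) \<Rightarrow> ('f, 'p) atom \<Rightarrow> ('f, 'p) atom \<Rightarrow> bool" where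
  "is_mgu \<sigma> A B \<longleftrightarrow> subst_atom \<sigma> A = subst_atom \<sigma> B \<and>
     (\<forall>\<tau>. subst_atom \<tau> A = subst_atom \<tau> B \<longrightarrow> (\<exists>\<gamma>. \<forall>x. \<tau> x = subst \<gamma> (\<sigma> x)))"

definition subst_ccl :: "(nat \<Rightarrow> 'f trm) \<Rightarrow> ('f, 'p) cclause \<Rightarrow> ('f, 'p) cclause" where
  "subst_ccl \<sigma> Cl = (subst_cl \<sigma> (fst Cl), subst_sdc \<sigma> (snd Cl))"

definition vars_ccl :: "('f, 'p) cclause \<Rightarrow> nat set" where
  "vars_ccl Cl = vars_cl (fst Cl) \<union> lhs_vars (snd Cl)"

definition sdc_resolution :: "('f \<Rightarrow> nat) \<Rightarrow> (('f, 'p) atom \<Rightarrow> ('f, 'p) atom \<Rightarrow> bool) \<Rightarrow>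
    ('f, 'p) cclause \<Rightarrow> ('f, 'p) cclause \<Rightarrow> ('f, 'p) cclause \<Rightarrow> bool" where
  "sdc_resolution ar lt P1 P2 R \<longleftrightarrow>
     (\<exists>\<Gamma>1 \<Delta>1 A \<pi>1 \<Gamma>2 B \<Delta>2 \<pi>2 \<sigma> \<pi>.
        P1 = ((\<Gamma>1, \<Delta>1 + {#A#}), \<pi>1) \<and> P2 = ((\<Gamma>2 + {#B#}, \<Delta>2), \<pi>2) \<and>
        vars_ccl P1 \<inter> vars_ccl P2 = {} \<and>
        is_mgu \<sigma> A B \<and>
        norm (subst_sdc \<sigma> (\<pi>1 + \<pi>2)) = Some \<pi> \<and> solvable ar \<pi> \<and>
        strictly_maximal ar lt (Pos (subst_atom \<sigma> A)) (subst_ccl \<sigma> P1) \<and>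
        sel (fst P1) = {#} \<and>
        (B \<in># sel (fst P2) \<or>
         (sel (fst P2) = {#} \<and> maximal ar lt (Neg (subst_atom \<sigma> B)) (subst_ccl \<sigma> P2))) \<and>
        R = (subst_cl \<sigma> (\<Gamma>1 + \<Gamma>2, \<Delta>1 + \<Delta>2), \<pi>))"

definition sdc_factoring :: "('f \<Rightarrow> nat) \<Rightarrow> (('f, 'p) atom \<Rightarrow> ('f, 'p) atom \<Rightarrow> bool) \<Rightarrow>
    ('f, 'p) cclause \<Rightarrow> ('f, 'p) cclause \<Rightarrow> bool" where
  "sdc_factoring ar lt P R \<longleftrightarrow>
     (\<exists>\<Gamma> \<Delta> A B \<pi>0 \<sigma> \<pi>.
        P = ((\<Gamma>, \<Delta> + {#A, B#}), \<pi>0) \<and>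
        is_mgu \<sigma> A B \<and>
        sel (fst P) = {#} \<and>
        maximal ar lt (Pos (subst_atom \<sigma> A)) (subst_ccl \<sigma> P) \<and>
        norm (subst_sdc \<sigma> \<pi>0) = Some \<pi> \<and> solvable ar \<pi> \<and>
        R = (subst_cl \<sigma> (\<Gamma>, \<Delta> + {#A#}), \<pi>))"

text \<open>Premises of inferences from \<open>N\<close> are variants (renamed copies) of clauses of \<open>N\<close>.\<close>
definition variant_in :: "('f, 'p) cclause set \<Rightarrow> ('f, 'p) cclause \<Rightarrow> bool" where
  "variant_in N P \<longleftrightarrow> (\<exists>\<rho> Cl. Cl \<in> N \<and> inj \<rho> \<and> P = subst_ccl (Var \<circ> \<rho>) Cl)"

definition redundant :: "('f \<Rightarrow> nat) \<Rightarrow> (('f, 'p) atom \<Rightarrow> ('f, 'p) atom \<Rightarrow> bool) \<Rightarrow>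
    ('f, 'p) cclause \<Rightarrow> ('f, 'p) cclause set \<Rightarrow> bool" where
  "redundant ar lt Cl N \<longleftrightarrow>
     (\<forall>D\<in>ground_inst ar {Cl}. \<exists>M. finite M \<and>
        M \<subseteq> {D' \<in> ground_inst ar N. cl_less lt D' D} \<and> entails M D)"

definition saturated :: "('f \<Rightarrow> nat) \<Rightarrow> (('f, 'p) atom \<Rightarrow> ('f, 'p) atom \<Rightarrow> bool) \<Rightarrow>
    ('f, 'p) cclause set \<Rightarrow> bool" where
  "saturated ar lt N \<longleftrightarrow>
     (\<forall>P1 P2 R. variant_in N P1 \<and> variant_in N P2 \<and> sdc_resolution ar lt P1 P2 R \<longrightarrow>
        redundant ar lt R N \<or> ground_inst ar {R} \<subseteq> ground_inst ar N) \<and>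
     (\<forall>P R. variant_in N P \<and> sdc_factoring ar lt P R \<longrightarrow>
        redundant ar lt R N \<or> ground_inst ar {R} \<subseteq> ground_inst ar N)"

section \<open>Partial model\<close>

text \<open>\<open>sel(D) = \<emptyset>\<close> for a ground instance \<open>D\<close>: \<open>D\<close> is an instance of a clause of \<open>N\<close> with empty selection.\<close>
definition sel_empty_inst :: "('f \<Rightarrow> nat) \<Rightarrow> ('f, 'p) cclause set \<Rightarrow> ('f, 'p) clause \<Rightarrow> bool" where
  "sel_empty_inst ar N D \<longleftrightarrow>
     (\<exists>C \<pi> \<delta>. (C, \<pi>) \<in> N \<and> solution ar \<delta> \<pi> \<and> D = subst_cl \<delta> C \<and> sel C = {#})"

definition prod_step :: "('f \<Rightarrow> nat) \<Rightarrow> (('f, 'p) atom \<Rightarrow> ('f, 'p) atom \<Rightarrow> bool) \<Rightarrow>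
    ('f, 'p) cclause set \<Rightarrow> (('f, 'p) clause \<Rightarrow> ('f, 'p) atom set) \<Rightarrow>
    ('f, 'p) clause \<Rightarrow> ('f, 'p) atom set" where
  "prod_step ar lt N rec D =
     {A. D \<in> ground_inst ar N \<and> sel_empty_inst ar N D \<and>
         gstrictly_maximal lt (Pos A) D \<and>
         \<not> true_cl (\<Union>{rec D' | D'. D' \<in> ground_inst ar N \<and> cl_less lt D' D}) D}"

text \<open>\<open>production D\<close> is \<open>\<delta>\<^sub>D\<close>, defined by well-founded recursion on the clause ordering.\<close>
definition production :: "('f \<Rightarrow> nat) \<Rightarrow> (('f, 'p) atom \<Rightarrow> ('f, 'p) atom \<Rightarrow> bool) \<Rightarrow>
    ('f, 'p) cclause set \<Rightarrow> ('f, 'p) clause \<Rightarrow> ('f, 'p) atom set" where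
  "production ar lt N = wfrec {(D, C). cl_less lt D C} (prod_step ar lt N)"

definition interp_at :: "('f \<Rightarrow> nat) \<Rightarrow> (('f, 'p) atom \<Rightarrow> ('f, 'p) atom \<Rightarrow> bool) \<Rightarrow>
    ('f, 'p) cclause set \<Rightarrow> ('f, 'p) clause \<Rightarrow> ('f, 'p) atom set" where
  "interp_at ar lt N C = \<Union>{production ar lt N D | D. D \<in> ground_inst ar N \<and> cl_less lt D C}"

definition partial_model :: "('f \<Rightarrow> nat) \<Rightarrow> (('f, 'p) atom \<Rightarrow> ('f, 'p) atom \<Rightarrow> bool) \<Rightarrow>
    ('f, 'p) cclause set \<Rightarrow> ('f, 'p) atom set" where
  "partial_model ar lt N = \<Union>{production ar lt N C | C. C \<in> ground_inst ar N}"

end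

theory Submission
  imports Defs
begin

text \<open>Bachmair-Ganzinger model construction. Suppose the empty clause is not a ground instance and
  let \<open>D\<close> be a minimal ground instance that is false in the partial model. If \<open>D\<close> is an instance of a
  clause with a selected atom \<open>B\<close>, then \<open>B\<delta>\<close> is true, hence produced by a smaller clause \<open>E\<close>; the ground
  resolvent of \<open>E\<close> and \<open>D\<close> lifts to an SDC-Resolution inference between variants of their clauses, and
  it is smaller than \<open>D\<close> and still false, contradicting saturation. Otherwise the selection function
  forces every body variable to be a proper subterm of a head argument, so each body atom lies below
  some head atom and the maximal literal of \<open>D\<close> is a head atom \<open>A\<close>. If \<open>A\<close> occurs twice, SDC-Factoring
  gives a smaller false instance; if it occurs once, \<open>D\<close> itself produces \<open>A\<close> and is therefore true.\<close>

lemma subst_Var [simp]: "subst Var t = t"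
  by (induction t) (auto simp: map_idI)

lemma subst_subst: "subst \<tau> (subst \<sigma> t) = subst (\<lambda>x. subst \<tau> (\<sigma> x)) t"
  by (induction t) auto

lemma subst_cong: "(\<And>x. x \<in> vars_trm t \<Longrightarrow> \<sigma> x = \<tau> x) \<Longrightarrow> subst \<sigma> t = subst \<tau> t"
  by (induction t) auto

lemma vars_trm_subst: "vars_trm (subst \<sigma> t) = (\<Union>x\<in>vars_trm t. vars_trm (\<sigma> x))"
  by (induction t) auto

lemma finite_vars_trm [simp]: "finite (vars_trm t)"
  by (induction t) auto

lemma wf_trm_subst: "wf_trm ar t \<Longrightarrow> (\<And>x. wf_trm ar (\<delta> x)) \<Longrightarrow> wf_trm ar (subst \<delta> t)"
  by (induction t) auto

lemma comp_subst_fixpoint: "(\<forall>x. \<tau> x = subst \<tau> (\<sigma> x)) \<Longrightarrow> (\<lambda>x. subst \<tau> (\<sigma> x)) = \<tau>"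
  by auto

lemma Var_mem_psubterms: "x \<in> vars_trm t \<Longrightarrow> t \<noteq> Var x \<Longrightarrow> Var x \<in> psubterms t"
proof (induction t)
  case (Fun f ts)
  then obtain t where "t \<in> set ts" "x \<in> vars_trm t" by auto
  with Fun show ?case by (cases "t = Var x") auto
qed simp

lemma psubterms_subst: "u \<in> psubterms t \<Longrightarrow> subst \<delta> u \<in> psubterms (subst \<delta> t)"
  by (induction t) auto

lemma size_less_of_psubterm: "u \<in> psubterms t \<Longrightarrow> size u < size t"
proof (induction t)
  case (Fun f ts)
  then obtain t where t: "t \<in> set ts" "u = t \<or> u \<in> psubterms t" by auto
  have "size t < size (Fun f ts)"
    using t(1) by (simp add: less_Suc_eq_le size_list_estimation')
  with t Fun.IH show ?case by force
qed simp

lemma occurs_check: "x \<in> vars_trm t \<Longrightarrow> t \<noteq> Var x \<Longrightarrow> \<tau> x \<noteq> subst \<tau> t"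
  using size_less_of_psubterm[OF psubterms_subst[OF Var_mem_psubterms], of x t \<tau>] by auto

section \<open>Most general unifiers\<close>

definition unifies :: "(nat \<Rightarrow> 'f trm) \<Rightarrow> ('f trm \<times> 'f trm) list \<Rightarrow> bool" where
  "unifies \<tau> E \<longleftrightarrow> (\<forall>(a, b)\<in>set E. subst \<tau> a = subst \<tau> b)"

text \<open>Every unifier \<open>\<tau>\<close> factors as \<open>\<tau> = \<sigma>\<tau>\<close>, with \<open>\<tau>\<close> itself as the second factor; this is
  stronger than the factorisation required by \<open>is_mgu\<close> and is what lets a ground solution of a
  constraint remain a solution after the mgu is applied.\<close>
definition mgu_eqs :: "(nat \<Rightarrow> 'f trm) \<Rightarrow> ('f trm \<times> 'f trm) list \<Rightarrow> bool" where
  "mgu_eqs \<sigma> E \<longleftrightarrow> unifies \<sigma> E \<and> (\<forall>\<tau>. unifies \<tau> E \<longrightarrow> (\<forall>x. \<tau> x = subst \<tau> (\<sigma> x)))"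

definition eqs_vars :: "('f trm \<times> 'f trm) list \<Rightarrow> nat set" where
  "eqs_vars E = (\<Union>(a, b)\<in>set E. vars_trm a \<union> vars_trm b)"

definition eqs_size :: "('f trm \<times> 'f trm) list \<Rightarrow> nat" where
  "eqs_size E = sum_list (map (\<lambda>(a, b). size a + size b + 1) E)"

lemma finite_eqs_vars [simp]: "finite (eqs_vars E)"
  unfolding eqs_vars_def by (auto split: prod.splits)

lemma unifies_zip:
  "length as = length bs \<Longrightarrow> unifies \<tau> (zip as bs) \<longleftrightarrow> subst \<tau> (Fun f as) = subst \<tau> (Fun f bs)"
  by (induction as bs rule: list_induct2) (auto simp: unifies_def)

lemma eqs_vars_zip:
  "length as = length bs \<Longrightarrow> eqs_vars (zip as bs) = vars_trm (Fun f as) \<union> vars_trm (Fun g bs)"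
  by (induction as bs rule: list_induct2) (auto simp: eqs_vars_def)

lemma eqs_size_zip:
  "length as = length bs \<Longrightarrow> eqs_size (zip as bs) < size (Fun f as) + size (Fun g bs)"
  by (induction as bs rule: list_induct2) (auto simp: eqs_size_def)

abbreviation subst_eqs :: "(nat \<Rightarrow> 'f trm) \<Rightarrow> ('f trm \<times> 'f trm) list \<Rightarrow> ('f trm \<times> 'f trm) list" where
  "subst_eqs \<sigma> \<equiv> map (\<lambda>(a, b). (subst \<sigma> a, subst \<sigma> b))"

lemma card_eqs_vars_elim:
  assumes "x \<notin> vars_trm t"
  shows "card (eqs_vars (subst_eqs (Var(x := t)) E)) < card (eqs_vars ((Var x, t) # E))"
proof -
  have "vars_trm (subst (Var(x := t)) u) \<subseteq> (vars_trm u - {x}) \<union> vars_trm t" for u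
    by (auto simp: vars_trm_subst split: if_splits)
  then have "eqs_vars (subst_eqs (Var(x := t)) E) \<subseteq> eqs_vars ((Var x, t) # E) - {x}"
    using assms by (fastforce simp: eqs_vars_def)
  moreover have "x \<in> eqs_vars ((Var x, t) # E)" by (simp add: eqs_vars_def)
  ultimately show ?thesis
    by (meson card_Diff1_less finite_eqs_vars order_le_less_trans card_mono finite_Diff)
qed

lemma mgu_eqs_elim:
  assumes x: "x \<notin> vars_trm t" and \<sigma>': "mgu_eqs \<sigma>' (subst_eqs (Var(x := t)) E)"
  shows "mgu_eqs (\<lambda>v. subst \<sigma>' ((Var(x := t)) v)) ((Var x, t) # E)"
    and "mgu_eqs (\<lambda>v. subst \<sigma>' ((Var(x := t)) v)) ((t, Var x) # E)"
proof -
  define \<rho> where "\<rho> = Var(x := t)"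
  define \<sigma> where "\<sigma> = (\<lambda>v. subst \<sigma>' (\<rho> v))"
  have mgu_\<rho>: "mgu_eqs \<sigma>' (subst_eqs \<rho> E)" using \<sigma>' by (simp add: \<rho>_def)
  have \<sigma>_subst: "subst \<sigma> u = subst \<sigma>' (subst \<rho> u)" for u
    by (simp add: \<sigma>_def subst_subst)
  have "subst \<rho> t = t"
    using x by (auto simp: \<rho>_def intro: subst_cong[where \<tau> = Var, simplified])
  then have unif_x: "subst \<sigma> (Var x) = subst \<sigma> t"
    by (simp add: \<sigma>_subst del: subst.simps) (simp add: \<rho>_def)
  have unif_E: "unifies \<sigma> E"
    using mgu_\<rho> by (auto simp: mgu_eqs_def unifies_def \<sigma>_subst)
  have general: "\<tau> v = subst \<tau> (\<sigma> v)" if "\<tau> x = subst \<tau> t" "unifies \<tau> E" for \<tau> v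
  proof -
    have \<tau>\<rho>: "subst \<tau> (subst \<rho> u) = subst \<tau> u" for u
      by (simp add: subst_subst, rule subst_cong) (auto simp: \<rho>_def that(1))
    then have "unifies \<tau> (subst_eqs \<rho> E)"
      using that(2) by (auto simp: unifies_def)
    then have "subst \<tau> u = subst \<tau> (subst \<sigma>' u)" for u
      using mgu_\<rho> by (simp add: subst_subst mgu_eqs_def)
    then show ?thesis
      using \<tau>\<rho>[of "Var v"] by (simp add: \<sigma>_def)
  qed
  show "mgu_eqs \<sigma> ((Var x, t) # E)" "mgu_eqs \<sigma> ((t, Var x) # E)"
    unfolding mgu_eqs_def \<sigma>_def[symmetric] \<rho>_def[symmetric]
    using unif_x unif_E general by (auto simp: unifies_def)
qed

text \<open>Robinson's algorithm as an induction: eliminating a variable decreases the number of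
  variables, decomposition and deleting trivial equations keep it and decrease the size.\<close>
lemma unifies_imp_mgu_eqs: "unifies \<delta> E \<Longrightarrow> \<exists>\<sigma>. mgu_eqs \<sigma> E"
proof (induction E arbitrary: \<delta> rule: wf_induct[OF wf_measures[of "[\<lambda>E. card (eqs_vars E), eqs_size]"]])
  case (1 E)
  show ?case
  proof (cases E)
    case Nil
    then show ?thesis by (auto simp: mgu_eqs_def unifies_def intro: exI[of _ Var])
  next
    case (Cons p E')
    obtain a b where E: "E = (a, b) # E'" using Cons by (cases p) auto
    have unif_E': "unifies \<delta> E'" and unif_ab: "subst \<delta> a = subst \<delta> b"
      using "1.prems" E by (auto simp: unifies_def)
    consider (trivial) "a = b" | (var) x t where "a \<noteq> b" "(a = Var x \<and> b = t) \<or> (b = Var x \<and> a = t)"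
      | (decompose) f as g bs where "a = Fun f as" "b = Fun g bs"
      by (metis trm.exhaust)
    then show ?thesis
    proof cases
      case trivial
      have "card (eqs_vars E') \<le> card (eqs_vars E)"
        by (rule card_mono) (auto simp: E eqs_vars_def)
      moreover have "eqs_size E' < eqs_size E" by (simp add: E eqs_size_def)
      ultimately obtain \<sigma> where "mgu_eqs \<sigma> E'"
        using "1.IH" unif_E' by (fastforce simp: le_less)
      then have "mgu_eqs \<sigma> E" by (auto simp: E trivial mgu_eqs_def unifies_def)
      then show ?thesis by blast
    next
      case var
      have x: "x \<notin> vars_trm t"
        using occurs_check[of x t \<delta>] var unif_ab by auto
      let ?E2 = "subst_eqs (Var(x := t)) E'"
      have "subst \<delta> (subst (Var(x := t)) u) = subst \<delta> u" for u
        using var unif_ab by (simp add: subst_subst, intro subst_cong) auto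
      then have "unifies \<delta> ?E2" using unif_E' by (auto simp: unifies_def)
      moreover have "card (eqs_vars ?E2) < card (eqs_vars E)"
        using card_eqs_vars_elim[OF x, of E'] var by (auto simp: E eqs_vars_def Un_commute)
      ultimately obtain \<sigma>' where "mgu_eqs \<sigma>' ?E2" using "1.IH" by fastforce
      from mgu_eqs_elim[OF x this] show ?thesis using var E by blast
    next
      case decompose
      have fg: "f = g" "map (subst \<delta>) as = map (subst \<delta>) bs"
        using unif_ab decompose by auto
      then have len: "length as = length bs" by (metis length_map)
      let ?E2 = "zip as bs @ E'"
      have "eqs_vars ?E2 = eqs_vars E"
        using eqs_vars_zip[OF len, of f g] decompose by (auto simp: E eqs_vars_def)
      moreover have "eqs_size ?E2 < eqs_size E"
        using eqs_size_zip[OF len, of f g] decompose by (simp add: E eqs_size_def)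
      moreover have same_unifiers: "unifies \<tau> ?E2 \<longleftrightarrow> unifies \<tau> E" for \<tau>
        using unifies_zip[OF len, of \<tau> f] decompose fg(1) by (auto simp: E unifies_def)
      ultimately obtain \<sigma> where "mgu_eqs \<sigma> ?E2"
        using "1.IH" "1.prems" by fastforce
      then have "mgu_eqs \<sigma> E" using same_unifiers unfolding mgu_eqs_def by blast
      then show ?thesis by blast
    qed
  qed
qed

lemma unifiable_Pred_imp_mgu:
  assumes "subst_atom \<delta> (Pred P s) = subst_atom \<delta> (Pred Q t)"
  obtains \<sigma> where "is_mgu \<sigma> (Pred P s) (Pred Q t)" "\<forall>x. \<delta> x = subst \<delta> (\<sigma> x)"
proof -
  have "P = Q" "unifies \<delta> [(s, t)]" using assms by (auto simp: unifies_def)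
  moreover obtain \<sigma> where "mgu_eqs \<sigma> [(s, t)]"
    using unifies_imp_mgu_eqs[OF \<open>unifies \<delta> [(s, t)]\<close>] by blast
  ultimately show ?thesis
    by (intro that[of \<sigma>]) (auto simp: is_mgu_def mgu_eqs_def unifies_def)
qed

section \<open>Straight terms and normalisation of constraints\<close>

lemma set_vars_list [simp]: "set (vars_list t) = vars_trm t"
  by (induction t) auto

lemma distinct_concat_nth_disjoint:
  "distinct (concat xs) \<Longrightarrow> j < length xs \<Longrightarrow> k < length xs \<Longrightarrow> j \<noteq> k \<Longrightarrow>
   set (xs ! j) \<inter> set (xs ! k) = {}"
proof (induction xs arbitrary: j k)
  case (Cons x xs)
  then show ?case
    by (cases j; cases k) (auto dest!: nth_mem)
qed simp

lemma instance_of_Var: "instance_of u (Var y)"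
  unfolding instance_of_def by (rule exI[of _ "\<lambda>_. u"]) simp

lemma instance_of_linear_vars:
  assumes "length ys = length us" "\<forall>y\<in>set ys. is_var y" "linear_trm (Fun f ys)"
  shows "instance_of (Fun f us) (Fun f ys)"
proof -
  obtain xs where xs: "ys = map Var xs"
    using assms(2) unfolding is_var_def by (metis ex_map_conv)
  have distinct: "distinct xs" using assms(3) xs by (simp add: linear_trm_def comp_def)
  have len: "length xs = length us" using assms(1) xs by simp
  define \<theta> where "\<theta> v = (case map_of (zip xs us) v of Some u \<Rightarrow> u | None \<Rightarrow> Var v)" for v
  have "map (subst \<theta>) ys = us"
    by (rule nth_equalityI) (auto simp: xs \<theta>_def len map_of_zip_nth[OF len distinct])
  then show ?thesis unfolding instance_of_def by (intro exI[of _ \<theta>]) simp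
qed

text \<open>Matching a straight term reduces to matching its unique non-variable argument: the
  remaining arguments are distinct variables not occurring in it, so they can be bound freely.\<close>
lemma instance_of_straight_arg:
  assumes st: "straight (Fun f ss)" and len: "length ss = length us" and i: "i < length ss"
    and nonvar: "\<not> is_var (ss ! i)" and inst: "instance_of (us ! i) (ss ! i)"
  shows "instance_of (Fun f us) (Fun f ss)"
proof -
  obtain \<theta> where \<theta>: "subst \<theta> (ss ! i) = us ! i" using inst by (auto simp: instance_of_def)
  have others_var: "\<forall>j<length ss. j \<noteq> i \<longrightarrow> is_var (ss ! j)"
    using st nonvar i by auto
  have disjoint: "vars_trm (ss ! j) \<inter> vars_trm (ss ! l) = {}"
    if "j < length ss" "l < length ss" "j \<noteq> l" for j l
    using st that distinct_concat_nth_disjoint[of "map vars_list ss" j l]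
    by (simp add: linear_trm_def)
  define arg_of where "arg_of v j \<longleftrightarrow> j < length ss \<and> j \<noteq> i \<and> ss ! j = Var v" for v j
  have arg_of_unique: "arg_of v j \<Longrightarrow> arg_of v l \<Longrightarrow> j = l" for v j l
    using disjoint[of j l] by (auto simp: arg_of_def)
  define \<theta>' where "\<theta>' v = (if v \<in> vars_trm (ss ! i) then \<theta> v
      else if \<exists>j. arg_of v j then us ! (SOME j. arg_of v j) else Var v)" for v
  have "map (subst \<theta>') ss = us"
  proof (rule nth_equalityI)
    fix j assume j: "j < length (map (subst \<theta>') ss)"
    show "map (subst \<theta>') ss ! j = us ! j"
    proof (cases "j = i")
      case True
      have "subst \<theta>' (ss ! i) = subst \<theta> (ss ! i)"
        by (rule subst_cong) (simp add: \<theta>'_def)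
      then show ?thesis using True \<theta> j by simp
    next
      case False
      then obtain v where v: "ss ! j = Var v" using others_var j by (auto simp: is_var_def)
      then have "arg_of v j" using j False by (simp add: arg_of_def)
      moreover have "v \<notin> vars_trm (ss ! i)" using disjoint[of j i] j i False v by auto
      ultimately have "\<theta>' v = us ! j"
        using arg_of_unique someI[of "arg_of v"] by (auto simp: \<theta>'_def)
      then show ?thesis using v j by simp
    qed
  qed (use len in simp)
  then show ?thesis unfolding instance_of_def by (intro exI[of _ \<theta>']) simp
qed

definition straight_sdc :: "'f sdc \<Rightarrow> bool" where
  "straight_sdc \<pi> \<longleftrightarrow> (\<forall>(t, s)\<in>set_mset \<pi>. straight s)"

lemma straight_sdc_add [simp]: "straight_sdc (\<pi> + \<pi>') \<longleftrightarrow> straight_sdc \<pi> \<and> straight_sdc \<pi>'"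
  by (auto simp: straight_sdc_def)

lemma straight_sdc_subst_sdc [simp]: "straight_sdc (subst_sdc \<sigma> \<pi>) \<longleftrightarrow> straight_sdc \<pi>"
  by (auto simp: straight_sdc_def subst_sdc_def)

lemma straight_sdc_if_is_sdc: "is_sdc \<pi> \<Longrightarrow> straight_sdc \<pi>"
  by (auto simp: straight_sdc_def is_sdc_def)

definition straight_solved :: "('f \<Rightarrow> nat) \<Rightarrow> (nat \<Rightarrow> 'f trm) \<Rightarrow> 'f sdc option \<Rightarrow> bool" where
  "straight_solved ar \<tau> r \<longleftrightarrow> (\<exists>\<pi>. r = Some \<pi> \<and> solution ar \<tau> \<pi> \<and> straight_sdc \<pi>)"

lemma norm_step_straight_solved:
  "norm_step r r' \<Longrightarrow> straight_solved ar \<tau> r \<Longrightarrow> straight_solved ar \<tau> r'"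
proof (induction rule: norm_step.induct)
  case (r1 \<pi> f ts y)
  then show ?case by (auto simp: straight_solved_def solution_def instance_of_Var)
next
  case (r2 ys ts \<pi> f)
  then have "linear_trm (Fun f ys)" by (auto simp: straight_solved_def straight_sdc_def)
  then have "instance_of (subst \<tau> (Fun f ts)) (Fun f ys)"
    using r2 by (auto intro!: instance_of_linear_vars)
  then show ?case using r2 by (auto simp: straight_solved_def straight_sdc_def solution_def)
next
  case (r3 ss ts i \<pi> f)
  then have st: "straight (Fun f ss)"
    and no_inst: "\<not> instance_of (subst \<tau> (Fun f ts)) (Fun f ss)"
    by (auto simp: straight_solved_def straight_sdc_def solution_def)
  then have "\<not> instance_of (subst \<tau> (ts ! i)) (ss ! i)"
    using instance_of_straight_arg[OF st, of "map (subst \<tau>) ts" i] r3 by auto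
  moreover have "straight (ss ! i)" using st r3 by (auto simp: nth_mem)
  ultimately show ?case using r3 by (auto simp: straight_solved_def straight_sdc_def solution_def)
qed (auto simp: straight_solved_def straight_sdc_def solution_def)

definition sdc_size :: "'f sdc option \<Rightarrow> nat" where
  "sdc_size r = (case r of None \<Rightarrow> 0 | Some \<pi> \<Rightarrow> 1 + (\<Sum>(t, s)\<in>#\<pi>. size t + size s + 1))"

lemma sdc_size_norm_step: "norm_step r r' \<Longrightarrow> sdc_size r' < sdc_size r"
proof (induction rule: norm_step.induct)
  case (r3 ss ts i \<pi> f)
  then have "ts ! i \<in> set ts" "ss ! i \<in> set ss" by auto
  then have "size (ts ! i) < size (Fun f ts)" "size (ss ! i) < size (Fun f ss)"
    by (simp_all add: less_Suc_eq_le size_list_estimation')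
  then show ?case by (simp add: sdc_size_def)
qed (auto simp: sdc_size_def)

lemma norm_step_normal_form_exists: "\<exists>r'. norm_step\<^sup>*\<^sup>* r r' \<and> (\<forall>r''. \<not> norm_step r' r'')"
proof (induction r rule: measure_induct_rule[of sdc_size])
  case (less r)
  show ?case
  proof (cases "\<exists>r''. norm_step r r''")
    case True
    then obtain r'' where step: "norm_step r r''" by blast
    with less sdc_size_norm_step obtain r' where "norm_step\<^sup>*\<^sup>* r'' r'" "\<forall>r''. \<not> norm_step r' r''"
      by blast
    with step show ?thesis by (meson converse_rtranclp_into_rtranclp)
  qed blast
qed

lemma norm_preserves_solution:
  assumes "solution ar \<tau> \<pi>0" "straight_sdc \<pi>0"
  obtains \<pi> where "norm \<pi>0 = Some \<pi>" "solution ar \<tau> \<pi>"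
proof -
  have steps: "norm_step\<^sup>*\<^sup>* (Some \<pi>0) (norm \<pi>0)"
    unfolding norm_def by (rule someI2_ex[OF norm_step_normal_form_exists]) blast
  have "straight_solved ar \<tau> (Some \<pi>0)"
    using assms by (simp add: straight_solved_def)
  with steps have "straight_solved ar \<tau> (norm \<pi>0)"
    by (induction rule: rtranclp_induct) (auto intro: norm_step_straight_solved)
  then show ?thesis using that by (auto simp: straight_solved_def straight_sdc_def)
qed

lemma subst_atom_subst_atom: "subst_atom \<tau> (subst_atom \<sigma> A) = subst_atom (\<lambda>x. subst \<tau> (\<sigma> x)) A"
  by (cases A) (auto simp: subst_subst)

lemma subst_lit_subst_lit: "subst_lit \<tau> (subst_lit \<sigma> L) = subst_lit (\<lambda>x. subst \<tau> (\<sigma> x)) L"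
  by (cases L) (auto simp: subst_atom_subst_atom)

lemma subst_cl_subst_cl: "subst_cl \<tau> (subst_cl \<sigma> C) = subst_cl (\<lambda>x. subst \<tau> (\<sigma> x)) C"
  by (auto simp: subst_cl_def subst_atom_subst_atom multiset.map_comp comp_def)

lemma subst_atom_Var [simp]: "subst_atom Var A = A"
  by (cases A) auto

lemma subst_cl_Var [simp]: "subst_cl Var C = C"
  by (simp add: subst_cl_def multiset.map_ident_strong)

lemma subst_sdc_Var [simp]: "subst_sdc Var \<pi> = \<pi>"
  by (auto simp: subst_sdc_def case_prod_unfold)

lemma subst_cl_Pair [simp]:
  "subst_cl \<delta> (\<Gamma>, \<Delta>) = (image_mset (subst_atom \<delta>) \<Gamma>, image_mset (subst_atom \<delta>) \<Delta>)"
  by (simp add: subst_cl_def)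

lemma fst_subst_cl [simp]: "fst (subst_cl \<delta> C) = image_mset (subst_atom \<delta>) (fst C)"
  and snd_subst_cl [simp]: "snd (subst_cl \<delta> C) = image_mset (subst_atom \<delta>) (snd C)"
  by (simp_all add: subst_cl_def)

lemma lits_subst_cl: "lits (subst_cl \<sigma> C) = image_mset (subst_lit \<sigma>) (lits C)"
  by (simp add: lits_def subst_cl_def multiset.map_comp comp_def)

lemma Pos_mem_lits [simp]: "Pos A \<in># lits C \<longleftrightarrow> A \<in># snd C"
  and Neg_mem_lits [simp]: "Neg A \<in># lits C \<longleftrightarrow> A \<in># fst C"
  by (auto simp: lits_def)

lemma lits_minus_Pos: "A \<in># snd C \<Longrightarrow> lits C - {#Pos A#} = lits (fst C, snd C - {#A#})"
  by (cases C) (auto simp: lits_def image_mset_Diff)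

lemma lits_minus_Neg: "A \<in># fst C \<Longrightarrow> lits C = lits (fst C - {#A#}, snd C) + {#Neg A#}"
  by (cases C) (auto simp: lits_def image_mset_Diff)

lemma subst_atom_cong: "(\<And>x. x \<in> vars_atom A \<Longrightarrow> \<sigma> x = \<tau> x) \<Longrightarrow> subst_atom \<sigma> A = subst_atom \<tau> A"
  by (cases A) (auto intro: subst_cong)

lemma subst_cl_cong: "(\<And>x. x \<in> vars_cl C \<Longrightarrow> \<sigma> x = \<tau> x) \<Longrightarrow> subst_cl \<sigma> C = subst_cl \<tau> C"
  unfolding subst_cl_def vars_cl_def by (auto intro!: image_mset_cong subst_atom_cong)

lemma ground_atom_subst: "grounding ar \<delta> \<Longrightarrow> ground_atom (subst_atom \<delta> A)"
  by (cases A) (auto simp: ground_atom_def grounding_def ground_trm_def vars_trm_subst)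

lemma wf_atom_subst: "grounding ar \<delta> \<Longrightarrow> wf_atom ar A \<Longrightarrow> wf_atom ar (subst_atom \<delta> A)"
  by (cases A) (auto simp: grounding_def intro: wf_trm_subst)

lemma solution_add_iff: "solution ar \<tau> (\<pi> + \<pi>') \<longleftrightarrow> solution ar \<tau> \<pi> \<and> solution ar \<tau> \<pi>'"
  by (auto simp: solution_def)

lemma solution_subst_sdc:
  "grounding ar \<tau> \<Longrightarrow> solution ar (\<lambda>x. subst \<tau> (\<sigma> x)) \<pi> \<Longrightarrow> solution ar \<tau> (subst_sdc \<sigma> \<pi>)"
  by (auto simp: solution_def subst_sdc_def subst_subst)

lemma solution_subst_sdc_if_fixpoint:
  "\<forall>x. \<tau> x = subst \<tau> (\<sigma> x) \<Longrightarrow> solution ar \<tau> \<pi> \<Longrightarrow> solution ar \<tau> (subst_sdc \<sigma> \<pi>)"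
  by (auto simp: solution_def subst_sdc_def subst_subst comp_subst_fixpoint)

lemma solution_cong:
  assumes "grounding ar \<tau>" "\<forall>x\<in>lhs_vars \<pi>. \<tau> x = \<delta> x" "solution ar \<delta> \<pi>"
  shows "solution ar \<tau> \<pi>"
proof -
  have "subst \<tau> t = subst \<delta> t" if "(t, s) \<in># \<pi>" for t s
    using assms(2) that by (intro subst_cong) (force simp: lhs_vars_def)
  then show ?thesis using assms by (auto simp: solution_def)
qed

lemma finite_vars_atom [simp]: "finite (vars_atom A)"
  by (cases A) auto

lemma finite_vars_ccl: "finite (vars_ccl Cl)"
  by (auto simp: vars_ccl_def vars_cl_def lhs_vars_def)

text \<open>Lifting: a literal bound that holds in a ground instance \<open>C\<tau>\<close> holds, read through \<open>\<tau>\<close>,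
  in \<open>C\<sigma>\<close> whenever \<open>\<tau> = \<sigma>\<tau>\<close>; this turns ground (strict) maximality into the non-ground notion.\<close>
lemma lits_bound_lift:
  assumes L: "L \<in># lits C" and fixpoint: "\<forall>x. \<tau> x = subst \<tau> (\<sigma> x)"
    and bound: "\<forall>B\<in>set_mset (lits (subst_cl \<tau> C) - {#subst_lit \<tau> L#}). R B (subst_lit \<tau> L)"
  shows "\<forall>B\<in>set_mset (lits (subst_cl \<sigma> C) - {#subst_lit \<sigma> L#}).
           R (subst_lit \<tau> B) (subst_lit \<tau> (subst_lit \<sigma> L))"
proof
  have \<tau>\<sigma>: "subst_lit \<tau> (subst_lit \<sigma> X) = subst_lit \<tau> X" for X
    by (simp add: subst_lit_subst_lit comp_subst_fixpoint[OF fixpoint])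
  fix B assume "B \<in> set_mset (lits (subst_cl \<sigma> C) - {#subst_lit \<sigma> L#})"
  then have "B \<in># image_mset (subst_lit \<sigma>) (lits C - {#L#})"
    using L by (simp add: lits_subst_cl image_mset_Diff)
  then obtain B0 where B0: "B0 \<in># lits C - {#L#}" "B = subst_lit \<sigma> B0" by auto
  then have "subst_lit \<tau> B0 \<in># image_mset (subst_lit \<tau>) (lits C - {#L#})" by simp
  then have "subst_lit \<tau> B0 \<in># lits (subst_cl \<tau> C) - {#subst_lit \<tau> L#}"
    using L by (simp add: lits_subst_cl image_mset_Diff)
  then show "R (subst_lit \<tau> B) (subst_lit \<tau> (subst_lit \<sigma> L))"
    using bound by (simp add: B0(2) \<tau>\<sigma>)
qed

lemma strictly_maximal_lift:
  assumes L: "L \<in># lits C" and fixpoint: "\<forall>x. \<tau> x = subst \<tau> (\<sigma> x)" and "solution ar \<tau> \<pi>"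
    and "gstrictly_maximal lt (subst_lit \<tau> L) (subst_cl \<tau> C)"
  shows "strictly_maximal ar lt (subst_lit \<sigma> L) (subst_ccl \<sigma> (C, \<pi>))"
  unfolding strictly_maximal_def subst_ccl_def fst_conv snd_conv
proof (intro conjI exI)
  show "subst_lit \<sigma> L \<in># lits (subst_cl \<sigma> C)" using L by (simp add: lits_subst_cl)
  show "solution ar \<tau> (subst_sdc \<sigma> \<pi>)"
    using assms(3) fixpoint by (rule solution_subst_sdc_if_fixpoint[rotated])
  show "\<forall>B\<in>set_mset (lits (subst_cl \<sigma> C) - {#subst_lit \<sigma> L#}).
      lit_less lt (subst_lit \<tau> B) (subst_lit \<tau> (subst_lit \<sigma> L))"
    using assms(4) by (intro lits_bound_lift[OF L fixpoint]) (simp add: gstrictly_maximal_def)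
qed

lemma maximal_lift:
  assumes L: "L \<in># lits C" and fixpoint: "\<forall>x. \<tau> x = subst \<tau> (\<sigma> x)" and "solution ar \<tau> \<pi>"
    and "\<forall>B\<in>#lits (subst_cl \<tau> C). lit_le lt B (subst_lit \<tau> L)"
  shows "maximal ar lt (subst_lit \<sigma> L) (subst_ccl \<sigma> (C, \<pi>))"
  unfolding maximal_def subst_ccl_def fst_conv snd_conv
proof (intro conjI exI)
  show "subst_lit \<sigma> L \<in># lits (subst_cl \<sigma> C)" using L by (simp add: lits_subst_cl)
  show "solution ar \<tau> (subst_sdc \<sigma> \<pi>)"
    using assms(3) fixpoint by (rule solution_subst_sdc_if_fixpoint[rotated])
  show "\<forall>B\<in>set_mset (lits (subst_cl \<sigma> C) - {#subst_lit \<sigma> L#}).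
      lit_le lt (subst_lit \<tau> B) (subst_lit \<tau> (subst_lit \<sigma> L))"
    using assms(4) by (intro lits_bound_lift[OF L fixpoint]) (auto dest: in_diffD)
qed

lemma subst_renaming_inj: "inj \<rho> \<Longrightarrow> subst (Var \<circ> \<rho>) s = subst (Var \<circ> \<rho>) t \<Longrightarrow> s = t"
proof (induction s arbitrary: t)
  case (Var x)
  then show ?case by (cases t) (auto dest: injD)
next
  case (Fun f ss)
  then obtain ts where t: "t = Fun f ts" and map_eq: "map (subst (Var \<circ> \<rho>)) ss = map (subst (Var \<circ> \<rho>)) ts"
    by (cases t) (auto simp: comp_def)
  have "ss = ts"
  proof (rule list.inj_map_strong[OF _ map_eq])
    show "\<And>s t. s \<in> set ss \<Longrightarrow> t \<in> set ts \<Longrightarrow> subst (Var \<circ> \<rho>) s = subst (Var \<circ> \<rho>) t \<Longrightarrow> s = t"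
      using Fun.IH Fun.prems(1) by blast
  qed
  then show ?case using t by simp
qed

lemma is_var_subst_renaming [simp]: "is_var (subst (Var \<circ> \<rho>) t) \<longleftrightarrow> is_var t"
  by (cases t) (auto simp: is_var_def)

lemma vars_trm_subst_renaming: "vars_trm (subst (Var \<circ> \<rho>) t) = \<rho> ` vars_trm t"
  by (auto simp: vars_trm_subst)

lemma vars_atom_subst_renaming: "vars_atom (subst_atom (Var \<circ> \<rho>) A) = \<rho> ` vars_atom A"
  by (cases A) (auto simp: vars_trm_subst_renaming)

lemma vars_ccl_subst_renaming: "vars_ccl (subst_ccl (Var \<circ> \<rho>) Cl) = \<rho> ` vars_ccl Cl"
  unfolding vars_ccl_def subst_ccl_def vars_cl_def lhs_vars_def subst_sdc_def
  by (force simp: vars_atom_subst_renaming vars_trm_subst_renaming case_prod_unfold)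

lemma Pred_mem_renamed_iff:
  "Pred S t \<in># image_mset (subst_atom (Var \<circ> \<rho>)) \<Gamma> \<longleftrightarrow>
   (\<exists>t0. Pred S t0 \<in># \<Gamma> \<and> t = subst (Var \<circ> \<rho>) t0)"
proof
  assume "Pred S t \<in># image_mset (subst_atom (Var \<circ> \<rho>)) \<Gamma>"
  then obtain A where "A \<in># \<Gamma>" "subst_atom (Var \<circ> \<rho>) A = Pred S t" by auto
  then show "\<exists>t0. Pred S t0 \<in># \<Gamma> \<and> t = subst (Var \<circ> \<rho>) t0" by (cases A) auto
qed (metis image_eqI set_image_mset subst_atom.simps(1))

lemma sel_subst_renaming:
  fixes C :: "('f, 'p) clause"
  assumes inj: "inj \<rho>"
  shows "sel (subst_cl (Var \<circ> \<rho>) C) = image_mset (subst_atom (Var \<circ> \<rho>)) (sel C)"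
proof -
  let ?r = "subst (Var \<circ> \<rho>)"
  let ?f = "subst_atom (Var \<circ> \<rho>)"
  obtain \<Gamma> \<Delta> where C: "C = (\<Gamma>, \<Delta>)" by (cases C)
  define vD where "vD = (\<Union>A\<in>set_mset \<Delta>. vars_atom A)"
  define args where "args = {t. \<exists>S. Pred S t \<in># \<Gamma>}"
  define vD' where "vD' = (\<Union>A\<in>set_mset (image_mset ?f \<Delta>). vars_atom A)"
  define args' where "args' = {t. \<exists>S. Pred S t \<in># image_mset ?f \<Gamma>}"
  have vD': "vD' = \<rho> ` vD" by (auto simp: vD'_def vD_def vars_atom_subst_renaming)
  have args': "args' = ?r ` args" unfolding args'_def args_def Pred_mem_renamed_iff by blast
  define P where "P = (\<lambda>A::('f, 'p) atom. case A of
        Pred S t \<Rightarrow>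
          \<not> is_var t
        \<or> ((\<forall>t'\<in>args. is_var t') \<and> (\<forall>x. t = Var x \<longrightarrow> x \<notin> vD))
        \<or> (args \<subseteq> Var ` vD \<and> (\<exists>P. Pred P t \<in># \<Delta>))
      | Eq s t \<Rightarrow> False)"
  define P' where "P' = (\<lambda>A::('f, 'p) atom. case A of
        Pred S t \<Rightarrow>
          \<not> is_var t
        \<or> ((\<forall>t'\<in>args'. is_var t') \<and> (\<forall>x. t = Var x \<longrightarrow> x \<notin> vD'))
        \<or> (args' \<subseteq> Var ` vD' \<and> (\<exists>P. Pred P t \<in># image_mset ?f \<Delta>))
      | Eq s t \<Rightarrow> False)"
  have all_var: "(\<forall>t'\<in>args'. is_var t') \<longleftrightarrow> (\<forall>t'\<in>args. is_var t')" by (simp add: args')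
  have not_head_var: "(\<forall>x. ?r t = Var x \<longrightarrow> x \<notin> vD') \<longleftrightarrow> (\<forall>x. t = Var x \<longrightarrow> x \<notin> vD)" for t
    using inj by (cases t) (auto simp: vD' inj_image_mem_iff)
  have args_head_vars: "args' \<subseteq> Var ` vD' \<longleftrightarrow> args \<subseteq> Var ` vD"
  proof -
    have "?r t0 \<in> Var ` vD' \<longleftrightarrow> t0 \<in> Var ` vD" for t0
      using inj by (cases t0) (auto simp: vD' inj_image_mem_iff dest: injD)
    then show ?thesis unfolding args' by blast
  qed
  have head_arg: "(\<exists>P. Pred P (?r t) \<in># image_mset ?f \<Delta>) \<longleftrightarrow> (\<exists>P. Pred P t \<in># \<Delta>)" for t
    unfolding Pred_mem_renamed_iff using subst_renaming_inj[OF inj] by blast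
  have "P' (?f A) \<longleftrightarrow> P A" for A
    by (cases A) (simp_all only: P_def P'_def atom.case subst_atom.simps all_var not_head_var
        args_head_vars head_arg is_var_subst_renaming)
  moreover have "sel (subst_cl (Var \<circ> \<rho>) C) = filter_mset P' (image_mset ?f \<Gamma>)"
    unfolding sel_def Let_def subst_cl_def C fst_conv snd_conv P'_def vD'_def args'_def by (rule refl)
  moreover have "sel C = filter_mset P \<Gamma>"
    unfolding sel_def Let_def C fst_conv snd_conv P_def vD_def args_def by (rule refl)
  ultimately show ?thesis by (simp add: filter_mset_image_mset)
qed

lemma mem_selE:
  assumes "B \<in># sel C"
  obtains S t where "B = Pred S t" "B \<in># fst C"
  using assms unfolding sel_def Let_def by (auto split: atom.splits)

lemma sel_empty_body_var:
  assumes sel: "sel C = {#}" and A: "Pred S t \<in># fst C"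
  obtains x where "t = Var x" "x \<in> (\<Union>A\<in>set_mset (snd C). vars_atom A)" "\<forall>P. Pred P t \<notin># snd C"
proof -
  define vD where "vD = (\<Union>A\<in>set_mset (snd C). vars_atom A)"
  define args where "args = {t. \<exists>S. Pred S t \<in># fst C}"
  have not_sel: "\<not> (\<not> is_var t'
        \<or> ((\<forall>t'\<in>args. is_var t') \<and> (\<forall>x. t' = Var x \<longrightarrow> x \<notin> vD))
        \<or> (args \<subseteq> Var ` vD \<and> (\<exists>P. Pred P t' \<in># snd C)))" if "Pred S' t' \<in># fst C" for S' t'
    using sel that unfolding sel_def Let_def vD_def args_def
    by (auto simp: filter_mset_eq_mempty_iff dest!: spec[of _ "Pred S' t'"])
  then have "\<forall>t'\<in>args. is_var t'" by (auto simp: args_def)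
  then have head_var: "\<exists>x. t' = Var x \<and> x \<in> vD" if "Pred S' t' \<in># fst C" for S' t'
    using not_sel[OF that] by (auto simp: is_var_def)
  then have "args \<subseteq> Var ` vD" by (auto simp: args_def)
  then show ?thesis using not_sel[OF A] head_var[OF A] that by (auto simp: vD_def)
qed

lemma variant_in_self: "Cl \<in> N \<Longrightarrow> variant_in N Cl"
  unfolding variant_in_def
  by (intro exI[of _ id] exI[of _ Cl]) (simp add: subst_ccl_def comp_def prod_eq_iff)

lemma rename_apart:
  assumes "finite V" "grounding ar \<delta>" "grounding ar \<delta>'"
  obtains \<rho> \<delta>'' where "inj \<rho>" "\<forall>x. \<rho> x \<notin> V" "grounding ar \<delta>''"
    "\<forall>x\<in>V. \<delta>'' x = \<delta> x" "(\<lambda>x. \<delta>'' (\<rho> x)) = \<delta>'"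
proof -
  obtain M :: nat where M: "\<forall>v\<in>V. v < M"
    using assms(1) finite_nat_set_iff_bounded by auto
  show ?thesis
  proof
    show "inj (\<lambda>v. v + M)" by (auto intro: injI)
    show "grounding ar (\<lambda>v. if v < M then \<delta> v else \<delta>' (v - M))"
      using assms(2,3) by (auto simp: grounding_def)
  qed (use M in auto)
qed

lemma mult_if_dominated: "J \<noteq> {#} \<Longrightarrow> \<forall>k\<in>#K. \<exists>j\<in>#J. (k, j) \<in> r \<Longrightarrow> (K, J) \<in> mult r"
  using one_step_implies_mult[of J K r "{#}"] by simp

lemma lit_less_trans: "lit_less lt a b \<Longrightarrow> lit_less lt b c \<Longrightarrow> lit_less lt a c"
  unfolding lit_less_def mult_def by (meson trancl_trans)

lemma cl_less_trans: "cl_less lt a b \<Longrightarrow> cl_less lt b c \<Longrightarrow> cl_less lt a c"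
  unfolding cl_less_def mult_def by (meson trancl_trans)

lemma lit_less_Pos_Neg_same: "lit_less lt (Pos A) (Neg A)"
  unfolding lit_less_def lit_ms_def using one_step_implies_mult[of "{#A#}" "{#}" _ "{#A#}"] by simp

lemma lit_less_Pos_Pos: "lt A B \<Longrightarrow> lit_less lt (Pos A) (Pos B)"
  unfolding lit_less_def lit_ms_def using mult_if_dominated[of "{#B#}" "{#A#}"] by simp

lemma lit_less_Neg_Pos: "lt A B \<Longrightarrow> lit_less lt (Neg A) (Pos B)"
  unfolding lit_less_def lit_ms_def using mult_if_dominated[of "{#B#}" "{#A, A#}"] by simp

lemma lit_less_Pos_Neg: "lt A B \<Longrightarrow> lit_less lt (Pos A) (Neg B)"
  unfolding lit_less_def lit_ms_def using mult_if_dominated[of "{#B, B#}" "{#A#}"] by simp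

lemma wf_lit_less: "wf {(x, y). lt x y} \<Longrightarrow> wf {(L, L'). lit_less lt L L'}"
proof -
  have "{(L, L'). lit_less lt L L'} = inv_image (mult {(x, y). lt x y}) lit_ms"
    by (auto simp: lit_less_def inv_image_def)
  then show "wf {(x, y). lt x y} \<Longrightarrow> ?thesis" by (simp add: wf_mult)
qed

lemma wf_cl_less: "wf {(x, y). lt x y} \<Longrightarrow> wf {(D, C). cl_less lt D C}"
proof -
  have "{(D, C). cl_less lt D C} = inv_image (mult {(L, L'). lit_less lt L L'}) lits"
    by (auto simp: cl_less_def inv_image_def)
  then show "wf {(x, y). lt x y} \<Longrightarrow> ?thesis" by (simp add: wf_mult wf_lit_less)
qed

lemma cl_less_minus_Pos: "A \<in># snd D \<Longrightarrow> cl_less lt (fst D, snd D - {#A#}) D"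
  using one_step_implies_mult[of "{#Pos A#}" "{#}" _ "lits (fst D, snd D - {#A#})"]
  by (simp add: cl_less_def flip: lits_minus_Pos)

definition resolvent :: "('f, 'p) clause \<Rightarrow> ('f, 'p) clause \<Rightarrow> ('f, 'p) atom \<Rightarrow> ('f, 'p) clause" where
  "resolvent E D A = (fst E + (fst D - {#A#}), (snd E - {#A#}) + snd D)"

lemma cl_less_resolvent:
  assumes E: "gstrictly_maximal lt (Pos A) E" and D: "A \<in># fst D"
  shows "cl_less lt (resolvent E D A) D"
proof -
  have "A \<in># snd E" using E by (simp add: gstrictly_maximal_def)
  then have "lit_less lt L (Neg A)" if "L \<in># lits (fst E, snd E - {#A#})" for L
    using E that lit_less_trans[OF _ lit_less_Pos_Neg_same]
    by (auto simp: gstrictly_maximal_def lits_minus_Pos)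
  moreover have "lits (resolvent E D A) = lits (fst D - {#A#}, snd D) + lits (fst E, snd E - {#A#})"
    by (simp add: resolvent_def lits_def)
  ultimately show ?thesis
    unfolding cl_less_def lits_minus_Neg[OF D]
    using one_step_implies_mult[of "{#Neg A#}" "lits (fst E, snd E - {#A#})" _
        "lits (fst D - {#A#}, snd D)"] by auto
qed

lemma gstrictly_maximal_if_single:
  assumes single: "count (snd D) A = 1" and max: "\<forall>L\<in>#lits D. lit_le lt L (Pos A)"
  shows "gstrictly_maximal lt (Pos A) D"
  unfolding gstrictly_maximal_def
proof (intro conjI ballI)
  have A: "A \<in># snd D" using single by (intro count_inI) simp
  then show "Pos A \<in># lits D" by simp
  fix L assume L: "L \<in> set_mset (lits D - {#Pos A#})"
  have "L \<noteq> Pos A"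
    using L single by (auto simp: lits_minus_Pos[OF A] in_diff_count)
  then show "lit_less lt L (Pos A)" using max L by (auto simp: lit_le_def dest: in_diffD)
qed

lemma finite_has_maximal_wrt:
  assumes "finite S" "S \<noteq> {}" "transp lt" "\<forall>a. \<not> lt a a"
  obtains a where "a \<in> S" "\<forall>b\<in>S. \<not> lt a b"
  using assms(1,2)
proof (induction S arbitrary: thesis rule: finite_ne_induct)
  case (insert x F)
  then obtain a where a: "a \<in> F" "\<forall>b\<in>F. \<not> lt a b" by blast
  show ?case
  proof (cases "lt a x")
    case True
    then have "\<forall>b\<in>insert x F. \<not> lt x b" using a assms(3,4) by (metis insert_iff transpD)
    then show ?thesis using insert.prems by blast
  qed (use a insert.prems in blast)
qed (use assms(4) in blast)

section \<open>Lifting ground inferences\<close>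

lemma subst_cl_mem_ground_inst: "solution ar \<tau> \<pi> \<Longrightarrow> subst_cl \<tau> C \<in> ground_inst ar {(C, \<pi>)}"
  unfolding ground_inst_def by blast

lemma subst_cl_fixpoint:
  "\<forall>x. \<tau> x = subst \<tau> (\<sigma> x) \<Longrightarrow> subst_cl \<tau> (subst_cl \<sigma> C) = subst_cl \<tau> C"
  by (simp add: subst_cl_subst_cl comp_subst_fixpoint)

lemma resolution_lift:
  assumes P1: "P1 = ((\<Gamma>1, \<Delta>1 + {#Pred S1 s1#}), \<pi>1)" and P2: "P2 = ((\<Gamma>2 + {#Pred S2 s2#}, \<Delta>2), \<pi>2)"
    and disjoint: "vars_ccl P1 \<inter> vars_ccl P2 = {}"
    and sel: "sel (fst P1) = {#}" "Pred S2 s2 \<in># sel (fst P2)"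
    and straight: "straight_sdc \<pi>1" "straight_sdc \<pi>2"
    and sol: "solution ar \<tau> \<pi>1" "solution ar \<tau> \<pi>2"
    and unif: "subst_atom \<tau> (Pred S1 s1) = subst_atom \<tau> (Pred S2 s2)"
    and max: "gstrictly_maximal lt (Pos (subst_atom \<tau> (Pred S1 s1))) (subst_cl \<tau> (fst P1))"
  obtains R where "sdc_resolution ar lt P1 P2 R"
    and "subst_cl \<tau> (\<Gamma>1 + \<Gamma>2, \<Delta>1 + \<Delta>2) \<in> ground_inst ar {R}"
proof -
  obtain \<sigma> where mgu: "is_mgu \<sigma> (Pred S1 s1) (Pred S2 s2)" and fixpoint: "\<forall>x. \<tau> x = subst \<tau> (\<sigma> x)"
    using unifiable_Pred_imp_mgu[OF unif] by blast
  obtain \<pi> where \<pi>: "norm (subst_sdc \<sigma> (\<pi>1 + \<pi>2)) = Some \<pi>" "solution ar \<tau> \<pi>"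
    using norm_preserves_solution[of ar \<tau> "subst_sdc \<sigma> (\<pi>1 + \<pi>2)"] fixpoint sol straight
    by (auto simp: solution_subst_sdc_if_fixpoint solution_add_iff)
  have "strictly_maximal ar lt (subst_lit \<sigma> (Pos (Pred S1 s1))) (subst_ccl \<sigma> (fst P1, \<pi>1))"
    using max by (intro strictly_maximal_lift[OF _ fixpoint sol(1)]) (simp_all add: P1)
  then have smax: "strictly_maximal ar lt (Pos (subst_atom \<sigma> (Pred S1 s1))) (subst_ccl \<sigma> P1)"
    by (simp add: P1)
  define R where "R = (subst_cl \<sigma> (\<Gamma>1 + \<Gamma>2, \<Delta>1 + \<Delta>2), \<pi>)"
  have "sdc_resolution ar lt P1 P2 R"
    unfolding sdc_resolution_def
    by (rule exI[of _ \<Gamma>1], rule exI[of _ \<Delta>1], rule exI[of _ "Pred S1 s1"], rule exI[of _ \<pi>1],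
        rule exI[of _ \<Gamma>2], rule exI[of _ "Pred S2 s2"], rule exI[of _ \<Delta>2], rule exI[of _ \<pi>2],
        rule exI[of _ \<sigma>], rule exI[of _ \<pi>])
      (use P1 P2 disjoint sel mgu \<pi> smax in \<open>auto simp: R_def solvable_def\<close>)
  moreover have "subst_cl \<tau> (\<Gamma>1 + \<Gamma>2, \<Delta>1 + \<Delta>2) \<in> ground_inst ar {R}"
    using subst_cl_mem_ground_inst[OF \<pi>(2), of "subst_cl \<sigma> (\<Gamma>1 + \<Gamma>2, \<Delta>1 + \<Delta>2)"]
    by (simp only: R_def subst_cl_fixpoint[OF fixpoint])
  ultimately show ?thesis by (rule that)
qed

lemma factoring_lift:
  assumes P: "P = ((\<Gamma>, \<Delta> + {#Pred S1 s1, Pred S2 s2#}), \<pi>0)"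
    and sel: "sel (fst P) = {#}" and straight: "straight_sdc \<pi>0" and sol: "solution ar \<tau> \<pi>0"
    and unif: "subst_atom \<tau> (Pred S1 s1) = subst_atom \<tau> (Pred S2 s2)"
    and max: "\<forall>L\<in>#lits (subst_cl \<tau> (fst P)). lit_le lt L (Pos (subst_atom \<tau> (Pred S1 s1)))"
  obtains R where "sdc_factoring ar lt P R"
    and "subst_cl \<tau> (\<Gamma>, \<Delta> + {#Pred S1 s1#}) \<in> ground_inst ar {R}"
proof -
  obtain \<sigma> where mgu: "is_mgu \<sigma> (Pred S1 s1) (Pred S2 s2)" and fixpoint: "\<forall>x. \<tau> x = subst \<tau> (\<sigma> x)"
    using unifiable_Pred_imp_mgu[OF unif] by blast
  obtain \<pi> where \<pi>: "norm (subst_sdc \<sigma> \<pi>0) = Some \<pi>" "solution ar \<tau> \<pi>"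
    using norm_preserves_solution[of ar \<tau> "subst_sdc \<sigma> \<pi>0"] fixpoint sol straight
    by (auto simp: solution_subst_sdc_if_fixpoint)
  have "maximal ar lt (subst_lit \<sigma> (Pos (Pred S1 s1))) (subst_ccl \<sigma> (fst P, \<pi>0))"
    using max by (intro maximal_lift[OF _ fixpoint sol]) (simp_all add: P)
  then have mx: "maximal ar lt (Pos (subst_atom \<sigma> (Pred S1 s1))) (subst_ccl \<sigma> P)"
    by (simp add: P)
  define R where "R = (subst_cl \<sigma> (\<Gamma>, \<Delta> + {#Pred S1 s1#}), \<pi>)"
  have "sdc_factoring ar lt P R"
    unfolding sdc_factoring_def
    by (rule exI[of _ \<Gamma>], rule exI[of _ \<Delta>], rule exI[of _ "Pred S1 s1"], rule exI[of _ "Pred S2 s2"],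
        rule exI[of _ \<pi>0], rule exI[of _ \<sigma>], rule exI[of _ \<pi>])
      (use P sel mgu \<pi> mx in \<open>auto simp: R_def solvable_def\<close>)
  moreover have "subst_cl \<tau> (\<Gamma>, \<Delta> + {#Pred S1 s1#}) \<in> ground_inst ar {R}"
    using subst_cl_mem_ground_inst[OF \<pi>(2), of "subst_cl \<sigma> (\<Gamma>, \<Delta> + {#Pred S1 s1#})"]
    by (simp only: R_def subst_cl_fixpoint[OF fixpoint])
  ultimately show ?thesis by (rule that)
qed

lemma subst_cl_renamed_resolvent:
  fixes \<rho> :: "nat \<Rightarrow> nat"
  defines "r \<equiv> subst_atom (Var \<circ> \<rho>)"
  assumes \<rho>: "(\<lambda>x. \<tau> (\<rho> x)) = \<delta>1"
    and \<tau>_C: "subst_cl \<tau> C = subst_cl \<delta> C" "subst_atom \<tau> B = subst_atom \<delta> B"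
    and A0: "A0 \<in># snd C1" "subst_atom \<delta>1 A0 = A" and B: "B \<in># fst C" "subst_atom \<delta> B = A"
    and A0_r: "subst_atom \<tau> (r A0) = A"
  shows "subst_cl \<tau> (image_mset r (fst C1) + (fst C - {#B#}), image_mset r (snd C1 - {#A0#}) + snd C)
    = resolvent (subst_cl \<delta>1 C1) (subst_cl \<delta> C) A"
proof -
  have renamed: "image_mset (subst_atom \<tau>) (image_mset r X) = image_mset (subst_atom \<delta>1) X" for X
    by (simp add: r_def multiset.map_comp comp_def subst_atom_subst_atom \<rho>)
  have \<tau>_fst: "image_mset (subst_atom \<tau>) (fst C) = fst (subst_cl \<delta> C)"
    and \<tau>_snd: "image_mset (subst_atom \<tau>) (snd C) = snd (subst_cl \<delta> C)"
    using arg_cong[OF \<tau>_C(1), of fst] arg_cong[OF \<tau>_C(1), of snd] by simp_all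
  have "image_mset (subst_atom \<tau>) (fst C - {#B#}) = fst (subst_cl \<delta> C) - {#A#}"
    using B \<tau>_C(2) by (simp add: image_mset_Diff \<tau>_fst)
  moreover have "image_mset (subst_atom \<tau>) (image_mset r (snd C1 - {#A0#})) = snd (subst_cl \<delta>1 C1) - {#A#}"
    using A0 A0_r by (simp add: renamed image_mset_Diff)
  ultimately show ?thesis
    by (simp only: resolvent_def subst_cl_Pair image_mset_union renamed \<tau>_snd fst_subst_cl)
qed

section \<open>The partial model of a saturated set of MSL(SDC) clauses\<close>

locale saturated_msl_sdc =
  fixes N :: "('f, 'p) cclause set" and ar :: "'f \<Rightarrow> nat"
    and lt :: "('f, 'p) atom \<Rightarrow> ('f, 'p) atom \<Rightarrow> bool"
  assumes ordering: "atom_ordering ar lt"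
    and msl: "\<forall>Cl\<in>N. msl_sdc Cl \<and> wf_ccl ar Cl"
    and saturated: "saturated ar lt N"
begin

abbreviation GN :: "('f, 'p) clause set" where
  "GN \<equiv> ground_inst ar N"

abbreviation IN :: "('f, 'p) atom set" where
  "IN \<equiv> partial_model ar lt N"

lemma wf_lt: "wf {(x, y). lt x y}"
  and lt_irrefl: "\<not> lt A A"
  and transp_lt: "transp lt"
  using ordering by (simp_all add: atom_ordering_def)

lemma lt_total:
  "ground_atom A \<Longrightarrow> wf_atom ar A \<Longrightarrow> ground_atom B \<Longrightarrow> wf_atom ar B \<Longrightarrow> A \<noteq> B \<Longrightarrow> lt A B \<or> lt B A"
  using ordering by (simp add: atom_ordering_def)

lemma ground_instE:
  assumes "D \<in> GN"
  obtains C \<pi> \<delta> where "(C, \<pi>) \<in> N" "solution ar \<delta> \<pi>" "D = subst_cl \<delta> C"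
  using assms by (auto simp: ground_inst_def)

lemma is_sdc_constraint: "(C, \<pi>) \<in> N \<Longrightarrow> is_sdc \<pi>"
  using msl by (auto simp: msl_sdc_def Let_def)

lemma head_atomE:
  assumes "(C, \<pi>) \<in> N" "A \<in># snd C"
  obtains S t where "A = Pred S t"
proof -
  have "\<forall>A\<in>#snd C. \<forall>s t. A \<noteq> Eq s t"
    using bspec[OF msl assms(1)] by (simp add: msl_sdc_def Let_def)
  then show ?thesis using assms(2) that by (cases A) auto
qed

lemma body_cases:
  assumes "(C, \<pi>) \<in> N"
  obtains "\<forall>A\<in>#fst C. \<forall>s t. A \<noteq> Eq s t" | s t where "fst C = {#Eq s t#}"
  using assms msl by (auto simp: msl_sdc_def Let_def)

lemma ground_inst_atoms:
  assumes "D \<in> GN" "A \<in># fst D + snd D"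
  shows "ground_atom A \<and> wf_atom ar A"
proof -
  obtain C \<pi> \<delta> where C: "(C, \<pi>) \<in> N" "solution ar \<delta> \<pi>" "D = subst_cl \<delta> C"
    using assms(1) by (rule ground_instE)
  then obtain A0 where A0: "A0 \<in># fst C + snd C" "A = subst_atom \<delta> A0"
    using assms(2) by auto
  have "wf_atom ar A0" using msl C(1) A0(1) by (auto simp: wf_ccl_def)
  then show ?thesis
    using C(2) A0(2) ground_atom_subst wf_atom_subst by (auto simp: solution_def)
qed

lemma mem_production_iff:
  "A \<in> production ar lt N D \<longleftrightarrow>
     D \<in> GN \<and> sel_empty_inst ar N D \<and> gstrictly_maximal lt (Pos A) D \<and>
     \<not> true_cl (interp_at ar lt N D) D"
proof -
  let ?R = "{(D, C). cl_less lt D C}"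
  have "production ar lt N D = prod_step ar lt N (cut (production ar lt N) ?R D) D"
    unfolding production_def by (rule wfrec[OF wf_cl_less[OF wf_lt]])
  also have "\<dots> = prod_step ar lt N (production ar lt N) D"
    unfolding prod_step_def by (rule arg_cong[where f = "\<lambda>X. _ X"]) (auto simp: cut_def)
  finally show ?thesis by (simp add: prod_step_def interp_at_def)
qed

lemma production_head: "A \<in> production ar lt N D \<Longrightarrow> A \<in># snd D"
  by (simp add: mem_production_iff gstrictly_maximal_def)

lemma mem_partial_model_iff: "A \<in> IN \<longleftrightarrow> (\<exists>D. A \<in> production ar lt N D)"
  unfolding partial_model_def using mem_production_iff by blast

lemma interp_at_subset: "interp_at ar lt N D \<subseteq> IN"
  by (auto simp: interp_at_def partial_model_def)

text \<open>The producing clause \<open>E\<close> is smaller than \<open>D\<close>, since \<open>Pos A\<close> is strictly maximal in \<open>E\<close>.\<close>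
lemma mem_interp_at:
  assumes A: "A \<in> production ar lt N E" and L: "L \<in># lits D" and less: "lit_less lt (Pos A) L"
  shows "A \<in> interp_at ar lt N D"
proof -
  have E: "E \<in> GN" "gstrictly_maximal lt (Pos A) E" using A by (auto simp: mem_production_iff)
  have "\<exists>j\<in>#lits D. lit_less lt k j" if "k \<in># lits E" for k
  proof (cases "k = Pos A")
    case False
    then have "lit_less lt k (Pos A)"
      using E(2) that by (auto simp: gstrictly_maximal_def in_diff_count not_in_iff)
    then show ?thesis using L less lit_less_trans by blast
  qed (use L less in blast)
  then have "cl_less lt E D"
    unfolding cl_less_def using L by (intro mult_if_dominated) auto
  then show ?thesis using A E(1) unfolding interp_at_def by blast
qed

lemma partial_model_atoms: "A \<in> IN \<Longrightarrow> ground_atom A \<and> wf_atom ar A \<and> (\<exists>S t. A = Pred S t)"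
proof -
  assume "A \<in> IN"
  then obtain D where A: "A \<in> production ar lt N D" by (auto simp: mem_partial_model_iff)
  then have D: "D \<in> GN" "A \<in># snd D" by (auto simp: mem_production_iff production_head)
  then obtain C \<pi> \<delta> where C: "(C, \<pi>) \<in> N" "D = subst_cl \<delta> C" by (auto elim: ground_instE)
  then obtain A0 where "A0 \<in># snd C" "A = subst_atom \<delta> A0" using D(2) by auto
  then show ?thesis using D ground_inst_atoms C(1) by (auto elim: head_atomE)
qed

definition minimal_counterexample :: "('f, 'p) clause \<Rightarrow> bool" where
  "minimal_counterexample D \<longleftrightarrow>
     D \<in> GN \<and> \<not> true_cl IN D \<and> (\<forall>D'\<in>GN. cl_less lt D' D \<longrightarrow> true_cl IN D')"

lemma covered_conclusion_true:
  assumes D: "minimal_counterexample D"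
    and R: "redundant ar lt R N \<or> ground_inst ar {R} \<subseteq> GN"
    and DR: "DR \<in> ground_inst ar {R}" "cl_less lt DR D"
  shows "true_cl IN DR"
  using R
proof
  assume "redundant ar lt R N"
  then obtain M where M: "M \<subseteq> {D' \<in> GN. cl_less lt D' DR}" "entails M DR"
    using DR(1) by (auto simp: redundant_def)
  have "true_cl IN D'" if "D' \<in> M" for D'
    using M(1) that D DR(2) cl_less_trans unfolding minimal_counterexample_def by blast
  with M(2) show ?thesis by (simp add: entails_def)
qed (use D DR in \<open>auto simp: minimal_counterexample_def\<close>)

lemma resolvent_false:
  assumes A: "A \<in> production ar lt N E" and D: "\<not> true_cl IN D" "A \<in># fst D"
  shows "\<not> true_cl IN (resolvent E D A)"
proof -
  have E: "gstrictly_maximal lt (Pos A) E" "\<not> true_cl (interp_at ar lt N E) E"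
    using A by (auto simp: mem_production_iff)
  have "X \<notin> IN" if X: "X \<in># snd E - {#A#}" for X
  proof
    assume "X \<in> IN"
    then obtain F where "X \<in> production ar lt N F" by (auto simp: mem_partial_model_iff)
    moreover have "lit_less lt (Pos X) (Pos A)"
      using E(1) X production_head[OF A] by (auto simp: gstrictly_maximal_def lits_minus_Pos)
    ultimately have "X \<in> interp_at ar lt N E"
      using production_head[OF A] by (intro mem_interp_at) auto
    then show False using E(2) X by (auto simp: true_cl_def dest: in_diffD)
  qed
  moreover have "set_mset (fst E) \<subseteq> IN" using E(2) interp_at_subset[of E] by (auto simp: true_cl_def)
  moreover have "set_mset (fst D) \<subseteq> IN" "set_mset (snd D) \<inter> IN = {}"
    using D(1) by (auto simp: true_cl_def)
  ultimately show ?thesis by (auto simp: true_cl_def resolvent_def dest: in_diffD)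
qed

lemma resolution_covered:
  assumes C1: "(C1, \<pi>1) \<in> N" "solution ar \<delta>1 \<pi>1" "sel C1 = {#}"
    and max: "gstrictly_maximal lt (Pos A) (subst_cl \<delta>1 C1)"
    and C: "(C, \<pi>) \<in> N" "solution ar \<delta> \<pi>" and B: "B \<in># sel C" "subst_atom \<delta> B = A"
  obtains R where "redundant ar lt R N \<or> ground_inst ar {R} \<subseteq> GN"
    and "resolvent (subst_cl \<delta>1 C1) (subst_cl \<delta> C) A \<in> ground_inst ar {R}"
proof -
  obtain A0 where A0: "A0 \<in># snd C1" "subst_atom \<delta>1 A0 = A"
    using max by (auto simp: gstrictly_maximal_def)
  obtain S1 s1 where A0_Pred: "A0 = Pred S1 s1" using C1(1) A0(1) by (rule head_atomE)
  obtain S2 s2 where B_Pred: "B = Pred S2 s2" and B_body: "B \<in># fst C" using B(1) by (rule mem_selE)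
  have "grounding ar \<delta>" "grounding ar \<delta>1" using C(2) C1(2) by (simp_all add: solution_def)
  then obtain \<rho> \<tau> where \<rho>: "inj \<rho>" "\<forall>x. \<rho> x \<notin> vars_ccl (C, \<pi>)" "grounding ar \<tau>"
      "\<forall>x\<in>vars_ccl (C, \<pi>). \<tau> x = \<delta> x" "(\<lambda>x. \<tau> (\<rho> x)) = \<delta>1"
    using rename_apart[OF finite_vars_ccl] by blast
  let ?r = "subst_atom (Var \<circ> \<rho>)"
  define P1 where "P1 = subst_ccl (Var \<circ> \<rho>) (C1, \<pi>1)"
  have "image_mset ?r (snd C1) = add_mset (?r A0) (image_mset ?r (snd C1 - {#A0#}))"
    using A0(1) by (simp flip: image_mset_add_mset)
  then have P1: "P1 = ((image_mset ?r (fst C1), image_mset ?r (snd C1 - {#A0#}) + {#Pred S1 (subst (Var \<circ> \<rho>) s1)#}),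
      subst_sdc (Var \<circ> \<rho>) \<pi>1)"
    by (simp add: P1_def subst_ccl_def subst_cl_def A0_Pred)
  have P2: "(C, \<pi>) = ((fst C - {#B#} + {#Pred S2 s2#}, snd C), \<pi>)"
    using B_body by (simp flip: B_Pred)
  have \<tau>_C: "subst_cl \<tau> C = subst_cl \<delta> C" "subst_atom \<tau> B = subst_atom \<delta> B"
    using \<rho>(4) B_body by (auto simp: vars_ccl_def vars_cl_def intro!: subst_cl_cong subst_atom_cong)
  have \<tau>_P1: "subst_cl \<tau> (fst P1) = subst_cl \<delta>1 C1" "subst_atom \<tau> (?r A0) = A"
    using A0(2) by (simp_all add: P1_def subst_ccl_def subst_cl_subst_cl subst_atom_subst_atom \<rho>(5))
  obtain R where inference: "sdc_resolution ar lt P1 (C, \<pi>) R"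
    and ground: "subst_cl \<tau> (image_mset ?r (fst C1) + (fst C - {#B#}),
        image_mset ?r (snd C1 - {#A0#}) + snd C) \<in> ground_inst ar {R}"
  proof (rule resolution_lift[OF P1 P2])
    show "vars_ccl P1 \<inter> vars_ccl (C, \<pi>) = {}"
      using \<rho>(2) by (auto simp: P1_def vars_ccl_subst_renaming)
    show "sel (fst P1) = {#}" using C1(3) by (simp add: P1_def subst_ccl_def sel_subst_renaming[OF \<rho>(1)])
    show "straight_sdc (subst_sdc (Var \<circ> \<rho>) \<pi>1)" "straight_sdc \<pi>"
      using C1(1) C(1) by (simp_all add: is_sdc_constraint straight_sdc_if_is_sdc)
    show "solution ar \<tau> (subst_sdc (Var \<circ> \<rho>) \<pi>1)"
      using C1(2) \<rho>(3) by (simp add: solution_subst_sdc \<rho>(5))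
    show "solution ar \<tau> \<pi>"
      using \<rho>(4) by (intro solution_cong[OF \<rho>(3) _ C(2)]) (auto simp: vars_ccl_def)
  qed (use B \<tau>_C \<tau>_P1 max in \<open>simp_all add: A0_Pred B_Pred\<close>)
  have "variant_in N P1" unfolding variant_in_def P1_def using C1(1) \<rho>(1) by blast
  then have "redundant ar lt R N \<or> ground_inst ar {R} \<subseteq> GN"
    using saturated inference variant_in_self[OF C(1)] unfolding saturated_def by blast
  moreover have "subst_cl \<tau> (image_mset ?r (fst C1) + (fst C - {#B#}), image_mset ?r (snd C1 - {#A0#}) + snd C)
      = resolvent (subst_cl \<delta>1 C1) (subst_cl \<delta> C) A"
    using \<rho>(5) \<tau>_C A0 B_body B(2) \<tau>_P1(2) by (rule subst_cl_renamed_resolvent)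
  ultimately show ?thesis using ground that by simp
qed

lemma minimal_counterexample_sel_empty:
  assumes D: "minimal_counterexample D" and C: "(C, \<pi>) \<in> N" "solution ar \<delta> \<pi>" "D = subst_cl \<delta> C"
  shows "sel C = {#}"
proof (rule ccontr)
  assume "sel C \<noteq> {#}"
  then obtain B where B: "B \<in># sel C" by blast
  then have B_body: "B \<in># fst C" by (auto elim: mem_selE)
  let ?A = "subst_atom \<delta> B"
  have A_body: "?A \<in># fst D" using B_body C(3) by simp
  then have "?A \<in> IN" using D by (auto simp: minimal_counterexample_def true_cl_def)
  then obtain E where E: "?A \<in> production ar lt N E" by (auto simp: mem_partial_model_iff)
  then obtain C1 \<pi>1 \<delta>1 where C1: "(C1, \<pi>1) \<in> N" "solution ar \<delta>1 \<pi>1" "sel C1 = {#}" "E = subst_cl \<delta>1 C1"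
    and max: "gstrictly_maximal lt (Pos ?A) E"
    by (auto simp: mem_production_iff sel_empty_inst_def)
  obtain R where "redundant ar lt R N \<or> ground_inst ar {R} \<subseteq> GN" "resolvent E D ?A \<in> ground_inst ar {R}"
    using resolution_covered[OF C1(1-3) max[unfolded C1(4)] C(1,2) B refl] C1(4) C(3) by metis
  moreover have "cl_less lt (resolvent E D ?A) D" using max A_body by (rule cl_less_resolvent)
  ultimately have "true_cl IN (resolvent E D ?A)" by (rule covered_conclusion_true[OF D])
  moreover have "\<not> true_cl IN (resolvent E D ?A)"
    using D A_body by (intro resolvent_false[OF E]) (auto simp: minimal_counterexample_def)
  ultimately show False by blast
qed

text \<open>By the selection function, a body atom of an unselected clause is \<open>S(x\<delta>)\<close> with \<open>x\<close> a proper
  subterm of the argument of some head atom \<open>P(t)\<close>; the ordering then puts \<open>S(x\<delta>)\<close> below \<open>P(t\<delta>)\<close>.\<close>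
lemma body_atom_below_head:
  assumes C: "(C, \<pi>) \<in> N" "solution ar \<delta> \<pi>" and sel: "sel C = {#}"
    and no_Eq: "\<forall>A\<in>#fst C. \<forall>s t. A \<noteq> Eq s t" and X: "X \<in># fst (subst_cl \<delta> C)"
  obtains Y where "Y \<in># snd (subst_cl \<delta> C)" "lt X Y"
proof -
  let ?D = "subst_cl \<delta> C"
  have D: "?D \<in> GN" using C unfolding ground_inst_def by blast
  obtain A where A: "A \<in># fst C" "X = subst_atom \<delta> A" using X by auto
  obtain S t where A_Pred: "A = Pred S t" using no_Eq A(1) by (cases A) auto
  obtain x where x: "t = Var x" "x \<in> (\<Union>A\<in>set_mset (snd C). vars_atom A)" "\<forall>P. Pred P t \<notin># snd C"
    using sel_empty_body_var[OF sel] A(1) A_Pred by blast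
  then obtain Y0 where Y0: "Y0 \<in># snd C" "x \<in> vars_atom Y0" by blast
  obtain P u where Y0_Pred: "Y0 = Pred P u" using C(1) Y0(1) by (rule head_atomE)
  have "u \<noteq> Var x" using x(1,3) Y0(1) Y0_Pred by auto
  then have sub: "\<delta> x \<in> psubterms (subst \<delta> u)"
    using Var_mem_psubterms psubterms_subst Y0(2) Y0_Pred by fastforce
  let ?X = "Pred S (\<delta> x)" and ?Y = "Pred P (subst \<delta> u)"
  have X_eq: "X = ?X" using A(2) A_Pred x(1) by simp
  have Y: "?Y \<in># snd ?D" using Y0(1) Y0_Pred by force
  have ground: "ground_atom ?X \<and> wf_atom ar ?X" "ground_atom ?Y \<and> wf_atom ar ?Y"
    using ground_inst_atoms[OF D, of ?X] ground_inst_atoms[OF D, of ?Y] X X_eq Y by auto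
  then have "\<not> lit_less lt (Pos ?Y) (Neg ?X)"
    using ordering sub unfolding atom_ordering_def by blast
  moreover have "?X \<noteq> ?Y" using size_less_of_psubterm[OF sub] by auto
  ultimately have "lt ?X ?Y" using lt_total ground lit_less_Pos_Neg by blast
  then show ?thesis using that Y X_eq by blast
qed

lemma maximal_head_atom:
  assumes C: "(C, \<pi>) \<in> N" "solution ar \<delta> \<pi>" and sel: "sel C = {#}"
    and no_Eq: "\<forall>A\<in>#fst C. \<forall>s t. A \<noteq> Eq s t" and ne: "subst_cl \<delta> C \<noteq> empty_cl"
  obtains A where "A \<in># snd (subst_cl \<delta> C)" "\<forall>L\<in>#lits (subst_cl \<delta> C). lit_le lt L (Pos A)"
proof -
  let ?D = "subst_cl \<delta> C"
  have D: "?D \<in> GN" using C unfolding ground_inst_def by blast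
  note body_below = body_atom_below_head[OF C sel no_Eq]
  have "snd ?D \<noteq> {#}"
  proof
    assume no_head: "snd ?D = {#}"
    have "fst ?D = {#}"
    proof (rule ccontr)
      assume "fst ?D \<noteq> {#}"
      then obtain X where "X \<in># fst ?D" by blast
      then obtain Y where "Y \<in># snd ?D" by (rule body_below)
      with no_head show False by simp
    qed
    with no_head ne show False by (simp add: empty_cl_def prod_eq_iff)
  qed
  then have "set_mset (snd ?D) \<noteq> {}" by simp
  then obtain A where A: "A \<in># snd ?D" "\<forall>B\<in>#snd ?D. \<not> lt A B"
    using finite_has_maximal_wrt[OF finite_set_mset _ transp_lt] lt_irrefl by blast
  have head_le: "B = A \<or> lt B A" if "B \<in># snd ?D" for B
  proof -
    have "ground_atom A \<and> wf_atom ar A" "ground_atom B \<and> wf_atom ar B"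
      using ground_inst_atoms[OF D] A(1) that by auto
    then show ?thesis using lt_total[of A B] A(2) that by blast
  qed
  have "lit_le lt L (Pos A)" if L: "L \<in># lits ?D" for L
  proof (cases L)
    case (Pos B)
    then show ?thesis using L head_le lit_less_Pos_Pos by (auto simp: lit_le_def)
  next
    case (Neg X)
    then have "X \<in># fst ?D" using L by simp
    then obtain Y where Y: "Y \<in># snd ?D" "lt X Y" by (rule body_below)
    have "lit_less lt (Neg X) (Pos Y)" using Y(2) by (rule lit_less_Neg_Pos)
    then show ?thesis
      using head_le[OF Y(1)] lit_less_Pos_Pos[of lt Y A] lit_less_trans[of lt "Neg X" "Pos Y" "Pos A"] Neg
      by (auto simp: lit_le_def)
  qed
  then show ?thesis using that A(1) by blast
qed

lemma factoring_covered:
  assumes C: "(C, \<pi>) \<in> N" "solution ar \<delta> \<pi>" "sel C = {#}"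
    and A: "count (snd (subst_cl \<delta> C)) A \<ge> 2"
    and max: "\<forall>L\<in>#lits (subst_cl \<delta> C). lit_le lt L (Pos A)"
  obtains R where "redundant ar lt R N \<or> ground_inst ar {R} \<subseteq> GN"
    and "(fst (subst_cl \<delta> C), snd (subst_cl \<delta> C) - {#A#}) \<in> ground_inst ar {R}"
proof -
  have "A \<in># snd (subst_cl \<delta> C)" using A by (metis not_in_iff not_numeral_le_zero)
  then obtain A1 where A1: "A1 \<in># snd C" "subst_atom \<delta> A1 = A" by auto
  have "A \<in># image_mset (subst_atom \<delta>) (snd C - {#A1#})"
    using A A1 by (simp add: image_mset_Diff in_diff_count)
  then obtain A2 where A2: "A2 \<in># snd C - {#A1#}" "subst_atom \<delta> A2 = A" by auto
  define \<Delta>0 where "\<Delta>0 = snd C - {#A1#} - {#A2#}"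
  have snd_C: "snd C = \<Delta>0 + {#A1, A2#}"
  proof -
    have "snd C - {#A1#} = add_mset A2 \<Delta>0"
      unfolding \<Delta>0_def using A2(1) by (rule insert_DiffM[symmetric])
    moreover have "snd C = add_mset A1 (snd C - {#A1#})" using A1(1) by simp
    ultimately show ?thesis by simp
  qed
  obtain S1 s1 where A1_Pred: "A1 = Pred S1 s1" using C(1) A1(1) by (rule head_atomE)
  obtain S2 s2 where A2_Pred: "A2 = Pred S2 s2" using C(1) A2(1) by (auto elim: head_atomE dest: in_diffD)
  have P: "(C, \<pi>) = ((fst C, \<Delta>0 + {#Pred S1 s1, Pred S2 s2#}), \<pi>)"
    using snd_C by (simp add: prod_eq_iff flip: A1_Pred A2_Pred)
  obtain R where inference: "sdc_factoring ar lt (C, \<pi>) R"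
    and ground: "subst_cl \<delta> (fst C, \<Delta>0 + {#Pred S1 s1#}) \<in> ground_inst ar {R}"
  proof (rule factoring_lift[OF P, where lt = lt])
    show "straight_sdc \<pi>" using C(1) by (simp add: is_sdc_constraint straight_sdc_if_is_sdc)
    show "subst_atom \<delta> (Pred S1 s1) = subst_atom \<delta> (Pred S2 s2)"
      using A1(2) A2(2) by (simp only: A1_Pred A2_Pred)
    show "\<forall>L\<in>#lits (subst_cl \<delta> (fst (C, \<pi>))). lit_le lt L (Pos (subst_atom \<delta> (Pred S1 s1)))"
      using max A1(2) by (simp only: A1_Pred fst_conv)
  qed (use C in simp_all)
  have "redundant ar lt R N \<or> ground_inst ar {R} \<subseteq> GN"
    using saturated inference variant_in_self[OF C(1)] unfolding saturated_def by blast
  moreover have "subst_cl \<delta> (fst C, \<Delta>0 + {#Pred S1 s1#}) = (fst (subst_cl \<delta> C), snd (subst_cl \<delta> C) - {#A#})"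
    using A2(2) by (simp add: snd_C A1_Pred[symmetric] A1(2))
  ultimately show ?thesis using ground that by simp
qed

lemma minimal_counterexample_empty:
  assumes D: "minimal_counterexample D" and C: "(C, \<pi>) \<in> N" "solution ar \<delta> \<pi>" "D = subst_cl \<delta> C"
  shows "D = empty_cl"
proof (rule ccontr)
  assume ne: "D \<noteq> empty_cl"
  have sel: "sel C = {#}" by (rule minimal_counterexample_sel_empty[OF D C])
  have false: "set_mset (fst D) \<subseteq> IN" "set_mset (snd D) \<inter> IN = {}"
    using D by (auto simp: minimal_counterexample_def true_cl_def)
  have no_Eq: "\<forall>A\<in>#fst C. \<forall>s t. A \<noteq> Eq s t"
  proof (cases rule: body_cases[OF C(1)])
    case (2 s t)
    then have "subst_atom \<delta> (Eq s t) \<in> IN" using false(1) C(3) by auto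
    then show ?thesis using partial_model_atoms by auto
  qed
  obtain A where A: "A \<in># snd D" and max: "\<forall>L\<in>#lits D. lit_le lt L (Pos A)"
    using maximal_head_atom[OF C(1,2) sel no_Eq] ne C(3) by blast
  show False
  proof (cases "count (snd D) A \<ge> 2")
    case True
    then obtain R where "redundant ar lt R N \<or> ground_inst ar {R} \<subseteq> GN"
      "(fst D, snd D - {#A#}) \<in> ground_inst ar {R}"
      using factoring_covered[OF C(1,2) sel] max C(3) by metis
    moreover have "cl_less lt (fst D, snd D - {#A#}) D" using A by (rule cl_less_minus_Pos)
    ultimately have "true_cl IN (fst D, snd D - {#A#})" by (rule covered_conclusion_true[OF D])
    then show False using false by (auto simp: true_cl_def dest: in_diffD)
  next
    case False
    moreover have "0 < count (snd D) A" using A by simp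
    ultimately have "count (snd D) A = 1" by linarith
    then have "gstrictly_maximal lt (Pos A) D" using max by (rule gstrictly_maximal_if_single)
    moreover have "set_mset (fst D) \<subseteq> interp_at ar lt N D"
    proof
      fix X assume X: "X \<in># fst D"
      then obtain F where "X \<in> production ar lt N F" using false(1) mem_partial_model_iff by blast
      then show "X \<in> interp_at ar lt N D"
        using X by (intro mem_interp_at[OF _ _ lit_less_Pos_Neg_same]) auto
    qed
    moreover have "set_mset (snd D) \<inter> interp_at ar lt N D = {}"
      using false(2) interp_at_subset[of D] by blast
    moreover have "D \<in> GN" using D by (simp add: minimal_counterexample_def)
    moreover have "sel_empty_inst ar N D" unfolding sel_empty_inst_def using C sel by blast
    ultimately have "A \<in> production ar lt N D" by (auto simp: mem_production_iff true_cl_def)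
    then show False using false(2) A mem_partial_model_iff by blast
  qed
qed

lemma partial_model_true: "empty_cl \<notin> GN \<Longrightarrow> D \<in> GN \<Longrightarrow> true_cl IN D"
proof (induction D rule: wf_induct[OF wf_cl_less[OF wf_lt]])
  case (1 D)
  show ?case
  proof (rule ccontr)
    assume "\<not> true_cl IN D"
    with 1 have "minimal_counterexample D" by (auto simp: minimal_counterexample_def)
    moreover obtain C \<pi> \<delta> where "(C, \<pi>) \<in> N" "solution ar \<delta> \<pi>" "D = subst_cl \<delta> C"
      using "1.prems"(2) by (rule ground_instE)
    ultimately have "D = empty_cl" by (rule minimal_counterexample_empty)
    then show False using 1 by simp
  qed
qed

end

theorem lemma3:
  fixes N :: "('f, 'p) cclause set"
    and ar :: "'f \<Rightarrow> nat"
    and lt :: "('f, 'p) atom \<Rightarrow> ('f, 'p) atom \<Rightarrow> bool"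
  assumes "atom_ordering ar lt"
    and "\<forall>Cl\<in>N. msl_sdc Cl \<and> wf_ccl ar Cl"
    and "saturated ar lt N"
  shows "(\<not> satisfiable ar N \<longleftrightarrow> empty_cl \<in> ground_inst ar N) \<and>
         (empty_cl \<notin> ground_inst ar N \<longrightarrow> models ar (partial_model ar lt N) N)"
proof -
  interpret saturated_msl_sdc N ar lt using assms by unfold_locales
  have model: "models ar (partial_model ar lt N) N" if "empty_cl \<notin> ground_inst ar N"
    using partial_model_true[OF that] by (auto simp: models_def)
  have "\<not> satisfiable ar N" if "empty_cl \<in> ground_inst ar N"
  proof
    assume "satisfiable ar N"
    then obtain I where "models ar I N" by (auto simp: satisfiable_def)
    with that have "true_cl I empty_cl" by (auto simp: models_def)
    then show False by (simp add: true_cl_def empty_cl_def)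
  qed
  moreover have "satisfiable ar N" if "empty_cl \<notin> ground_inst ar N"
    using model[OF that] partial_model_atoms unfolding satisfiable_def by blast
  ultimately show ?thesis using model by blast
qed

end
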